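(* Let $n\geq 1$, let $\pi_n$ be a probability distribution on $\{0,1,\dots,n\}$, and let $G$ be a one-dimensional distribution with Lebesgue density. Consider the model selection prior on $\theta\in\mathbb{R}^n$ with sparsity prior $\pi_n$ and factorizing slab $G$. For $c\in[0,\pi_n(n)]$ let $\mu=\mu(c)=(\mu_0,\dots,\mu_n)=\big(\binom{n}{0}^{-1}\pi_n(0),\binom{n}{1}^{-1}\pi_n(1),\dots,\binom{n}{n-1}^{-1}\pi_n(n-1),c\big)\in[0,1]^{n+1}$. (i) If $n=2k+1$ is odd, the model selection prior can be written in spike-and-slab form (for some probability measure $\Lambda_n$ on $[0,1]$) if and only if there exists $c_n\in[0,\pi_n(n)]$ such that, with $\mu=\mu(c_n)$, \[ H_k(\mu)\succeq 0,\quad H_k(F\mu)\succeq 0,\quad (\mu_{k+1},\mu_{k+2},\dots,\mu_{2k+1})^\top\in\mathrm{range}\big(H_k(\mu)\big). \] (ii) If $n=2k$ is even, the model selection prior can be written in spike-and-slab form if and only if there exists $c_n\in[0,\pi_n(n)]$ such that, with $\mu=\mu(c_n)$, \[ H_k(\mu)\succeq 0,\quad H_{k-1}(F\mu)\succeq 0,\quad (\mu_{k+1},\mu_{k+2},\dots,\mu_{2k})^\top\in\mathrm{range}\big(H_{k-1}(F\mu)\big). \]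
   Context: Model selection prior on $\theta=(\theta_1,\dots,\theta_n)$: first draw $s\sim\pi_n$ on $\{0,\dots,n\}$; given $s$, choose a subset $S\subset\{1,\dots,n\}$ with $|S|=s$ uniformly at random; given $S$, let $\theta_i$, $i\in S$, be i.i.d. $G$ and $\theta_i=0$ for $i\notin S$. Spike-and-slab form: there is a probability measure $\Lambda_n$ on $[0,1]$ such that the prior equals: $\alpha\sim\Lambda_n$ and, conditionally on $\alpha$, $\theta_i$ i.i.d. $(1-\alpha)\delta_0+\alpha G$, with $\delta_0$ the point mass at $0$ (same $G$). For a vector $\mu=(\mu_0,\dots,\mu_m)$ with $m\geq 2j$, $H_j(\mu)=[\mu_{a+b}]_{a,b=0,\dots,j}$ is the $(j+1)\times(j+1)$ Hankel matrix, and $F\mu=(\mu_1,\dots,\mu_m)$ drops the first coordinate (re-indexed from $0$). $A\succeq 0$ means $A$ is positive semi-definite, and $\mathrm{range}(A)$ is the column space of $A$. *)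

theory Defs
  imports "HOL-Probability.Probability"
begin

text \<open>Vectors of length n are modelled as functions on the index set {..<n};
  random vectors in R^n as measures on the product space PiM {..<n} (\<lambda>_. borel).\<close>

definition embed_support :: "nat \<Rightarrow> nat set \<Rightarrow> (nat \<Rightarrow> real) \<Rightarrow> (nat \<Rightarrow> real)" where
  "embed_support n S x = restrict (\<lambda>i. if i \<in> S then x i else 0) {..<n}"

definition model_selection_prior ::
  "nat \<Rightarrow> nat pmf \<Rightarrow> real measure \<Rightarrow> (nat \<Rightarrow> real) measure" where
  "model_selection_prior n \<pi> G =
     measure_pmf \<pi> \<bind> (\<lambda>s.
       measure_pmf (pmf_of_set {S. S \<subseteq> {..<n} \<and> card S = s}) \<bind> (\<lambda>S.
         distr (PiM S (\<lambda>_. G)) (PiM {..<n} (\<lambda>_. borel)) (embed_support n S)))"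

definition spike_slab_coord :: "real \<Rightarrow> real measure \<Rightarrow> real measure" where
  "spike_slab_coord \<alpha> G =
     measure_pmf (bernoulli_pmf \<alpha>) \<bind> (\<lambda>b. if b then G else return borel 0)"

definition spike_slab_prior ::
  "nat \<Rightarrow> real measure \<Rightarrow> real measure \<Rightarrow> (nat \<Rightarrow> real) measure" where
  "spike_slab_prior n \<Lambda> G = \<Lambda> \<bind> (\<lambda>\<alpha>. PiM {..<n} (\<lambda>_. spike_slab_coord \<alpha> G))"

definition has_spike_slab_form :: "nat \<Rightarrow> nat pmf \<Rightarrow> real measure \<Rightarrow> bool" where
  "has_spike_slab_form n \<pi> G \<longleftrightarrow>
     (\<exists>\<Lambda>. prob_space \<Lambda> \<and> sets \<Lambda> = sets (borel :: real measure) \<and> emeasure \<Lambda> {0..1} = 1 \<and>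
          model_selection_prior n \<pi> G = spike_slab_prior n \<Lambda> G)"

definition mu_vec :: "nat \<Rightarrow> nat pmf \<Rightarrow> real \<Rightarrow> nat \<Rightarrow> real" where
  "mu_vec n \<pi> c j = (if j < n then pmf \<pi> j / real (n choose j) else if j = n then c else 0)"

text \<open>Hankel matrix H_j(mu) = [mu_(a+b)]_(a,b=0..j), as a function of indices.\<close>
definition hankel :: "nat \<Rightarrow> (nat \<Rightarrow> real) \<Rightarrow> nat \<Rightarrow> nat \<Rightarrow> real" where
  "hankel j \<mu> a b = \<mu> (a + b)"

definition shiftF :: "(nat \<Rightarrow> real) \<Rightarrow> nat \<Rightarrow> real" where
  "shiftF \<mu> i = \<mu> (Suc i)"

definition psd :: "nat \<Rightarrow> (nat \<Rightarrow> nat \<Rightarrow> real) \<Rightarrow> bool" where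
  "psd d A \<longleftrightarrow> (\<forall>x :: nat \<Rightarrow> real. (\<Sum>a\<le>d. \<Sum>b\<le>d. x a * A a b * x b) \<ge> 0)"

definition in_range :: "nat \<Rightarrow> (nat \<Rightarrow> real) \<Rightarrow> (nat \<Rightarrow> nat \<Rightarrow> real) \<Rightarrow> bool" where
  "in_range d v A \<longleftrightarrow> (\<exists>x :: nat \<Rightarrow> real. \<forall>a\<le>d. (\<Sum>b\<le>d. A a b * x b) = v a)"

end

theory Submission
  imports Defs "HOL-Computational_Algebra.Polynomial"
begin

text \<open>After averaging over the support S of \<theta>, both priors give a box the mass of a mixture, with
  weights depending only on |S|, of the same slab-on-S masses; as G has no atom at 0 these masses
  separate the weights. So the model selection prior has spike-and-slab form iff
  \<pi>(j)/C(n,j) = \<integral> \<alpha>^j (1-\<alpha>)^(n-j) d\<Lambda> for some distribution \<Lambda> on [0,1], i.e. iff \<pi> is a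
  mixture of binomial distributions. Dropping the atom of \<Lambda> at 1 (which only changes the top
  moment, hence c \<le> \<pi>(n)) and substituting t = \<alpha>/(1-\<alpha>) turns this into a truncated Stieltjes
  moment problem for \<mu>(c).

  Necessity: the Hankel forms are integrals of \<alpha>^e (1-\<alpha>)^(n-2d-e) Q(\<alpha>)^2, and the isotropic vectors
  of the Hankel form annihilate the next moments, which for a positive semidefinite matrix gives the
  range condition. Sufficiency, which needs only the two semidefiniteness conditions: a polynomial
  nonnegative on [0,\<infinity>) is a sum f^2 + t g^2 with matching degree bounds, so the Hankel conditions
  make the moment functional nonnegative on it; a nearest-point argument over the (compact, by
  Helly's theorem) set of moment vectors of distributions on [0,1] then yields \<Lambda>.\<close>

section \<open>Positive semidefinite quadratic forms\<close>

lemma linear_coeff_nonneg_if_nonneg_near_0: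
  fixes a b :: real
  assumes "\<And>t. 0 < t \<Longrightarrow> t \<le> 1 \<Longrightarrow> a * t * t + 2 * b * t \<ge> 0"
  shows "b \<ge> 0"
proof (rule ccontr)
  assume "\<not> b \<ge> 0"
  define t where "t = min 1 (- b / (\<bar>a\<bar> + 1))"
  have "- b / (\<bar>a\<bar> + 1) > 0"
    using \<open>\<not> b \<ge> 0\<close> by (intro divide_pos_pos) auto
  then have t: "0 < t" "t \<le> 1"
    by (auto simp: t_def)
  have "a * t \<le> \<bar>a\<bar> * t"
    using t by (simp add: mult_right_mono)
  also have "\<dots> \<le> \<bar>a\<bar> * (- b / (\<bar>a\<bar> + 1))"
    by (intro mult_left_mono) (auto simp: t_def)
  also have "\<dots> < - b"
    using \<open>\<not> b \<ge> 0\<close> by (simp add: field_simps)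
  finally have "a * t + 2 * b < 0"
    using \<open>\<not> b \<ge> 0\<close> by linarith
  then have "t * (a * t + 2 * b) < 0"
    using t by (simp add: mult_pos_neg)
  then have "a * t * t + 2 * b * t < 0"
    by (simp add: algebra_simps)
  with assms[OF t] show False
    by simp
qed

lemma linear_coeff_zero_if_nonneg_quadratic:
  fixes a b :: real
  assumes "\<And>t. a * t * t + 2 * b * t \<ge> 0"
  shows "b = 0"
proof -
  have "b \<ge> 0"
    using assms by (rule linear_coeff_nonneg_if_nonneg_near_0)
  moreover have "- b \<ge> 0"
  proof (rule linear_coeff_nonneg_if_nonneg_near_0)
    show "a * t * t + 2 * - b * t \<ge> 0" for t
      using assms[of "- t"] by simp
  qed
  ultimately show ?thesis
    by simp
qed

definition quad_form :: "nat \<Rightarrow> (nat \<Rightarrow> nat \<Rightarrow> real) \<Rightarrow> (nat \<Rightarrow> real) \<Rightarrow> real" where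
  "quad_form N H y = (\<Sum>a<N. \<Sum>b<N. y a * H a b * y b)"

lemma quad_form_cong: "(\<And>i. i < N \<Longrightarrow> y i = z i) \<Longrightarrow> quad_form N H y = quad_form N H z"
  unfolding quad_form_def by (intro sum.cong refl) auto

lemma quad_form_Suc:
  assumes sym: "\<And>a b. H a b = H b a"
  shows "quad_form (Suc N) H y =
    quad_form N H y + 2 * y N * (\<Sum>b<N. H N b * y b) + y N * H N N * y N"
proof -
  have "(\<Sum>a<N. y a * H a N * y N) = y N * (\<Sum>b<N. H N b * y b)"
    by (simp add: sum_distrib_left sym mult_ac)
  moreover have "(\<Sum>b<N. y N * H N b * y b) = y N * (\<Sum>b<N. H N b * y b)"
    by (simp add: sum_distrib_left mult_ac)
  ultimately show ?thesis
    unfolding quad_form_def by (simp add: sum.distrib)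
qed

lemma quad_form_unit: "a < N \<Longrightarrow> quad_form N H (\<lambda>i. if i = a then t else 0) = t * H a a * t"
  unfolding quad_form_def
  by (simp add: if_distrib[of "\<lambda>x. x * _"] if_distrib[of "\<lambda>x. _ * x"] sum.delta cong: if_cong)

lemma psd_zero_diagonal_imp_zero_row:
  assumes sym: "\<And>a b. H a b = H b a" and psd: "\<And>y. quad_form (Suc N) H y \<ge> 0"
    and zero: "H N N = 0" and "a < N"
  shows "H a N = 0"
proof (rule linear_coeff_zero_if_nonneg_quadratic)
  fix t
  define y :: "nat \<Rightarrow> real" where "y = (\<lambda>i. if i = N then 1 else if i = a then t else 0)"
  have "quad_form N H y = t * H a a * t"
    using quad_form_unit[OF \<open>a < N\<close>, of H t]
    by (subst quad_form_cong[where z="\<lambda>i. if i = a then t else 0"]) (auto simp: y_def)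
  moreover have "(\<Sum>b<N. H N b * y b) = H a N * t"
    using \<open>a < N\<close> by (simp add: y_def sym[of N] if_distrib[of "\<lambda>x. _ * x"] sum.delta cong: if_cong)
  ultimately have "quad_form (Suc N) H y = H a a * t * t + 2 * H a N * t"
    by (simp add: quad_form_Suc[OF sym] y_def zero)
  then show "H a a * t * t + 2 * H a N * t \<ge> 0"
    using psd[of y] by simp
qed

lemma quad_form_Suc_update_zero:
  assumes sym: "\<And>a b. H a b = H b a"
  shows "quad_form (Suc N) H (y(N := 0)) = quad_form N H y"
  by (subst quad_form_Suc[OF sym]) (auto intro: quad_form_cong)

lemma quad_form_Suc_schur_complement:
  assumes sym: "\<And>a b. H a b = H b a" and pos: "H N N > 0"
  shows "quad_form (Suc N) H (y(N := - (\<Sum>b<N. H N b * y b) / H N N)) =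
    quad_form N (\<lambda>a b. H a b - H a N * H N b / H N N) y"
proof -
  define h where "h = H N N"
  define u where "u = (\<Sum>b<N. H N b * y b)"
  have "(\<Sum>a<N. \<Sum>b<N. y a * H a N * H N b * y b) = u * u"
    unfolding u_def by (simp add: sum_product sym[of _ N] mult_ac)
  then have "quad_form N (\<lambda>a b. H a b - H a N * H N b / h) y = quad_form N H y - u * u / h"
    unfolding quad_form_def by (simp add: algebra_simps sum_subtractf flip: sum_divide_distrib)
  moreover have "quad_form (Suc N) H (y(N := - u / h)) =
      quad_form N H y + 2 * (- u / h) * u + (- u / h) * h * (- u / h)"
    by (subst quad_form_Suc[OF sym]) (auto simp: h_def u_def intro: quad_form_cong)
  then have "quad_form (Suc N) H (y(N := - u / h)) = quad_form N H y - u * u / h"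
    using pos by (simp add: h_def field_simps)
  ultimately show ?thesis
    by (simp add: h_def u_def)
qed

lemma solvable_Suc_if_zero_last_column:
  fixes H :: "nat \<Rightarrow> nat \<Rightarrow> real"
  assumes sym: "\<And>a b. H a b = H b a" and column: "\<And>a. a \<le> N \<Longrightarrow> H a N = 0" and "w N = 0"
    and "\<exists>x. \<forall>a<N. (\<Sum>b<N. H a b * x b) = w a"
  shows "\<exists>x. \<forall>a<Suc N. (\<Sum>b<Suc N. H a b * x b) = w a"
proof -
  obtain x where x: "\<forall>a<N. (\<Sum>b<N. H a b * x b) = w a"
    using assms(4) by blast
  have "H N b = 0" if "b < N" for b
    using column[of b] sym[of N b] that by simp
  then have "(\<Sum>b<Suc N. H a b * (x(N := 0)) b) = w a" if "a < Suc N" for a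
    using that x \<open>w N = 0\<close> by (cases "a = N") simp_all
  then show ?thesis
    by blast
qed

lemma solvable_Suc_if_solvable_schur_complement:
  fixes H :: "nat \<Rightarrow> nat \<Rightarrow> real"
  assumes sym: "\<And>a b. H a b = H b a" and pos: "H N N > 0"
    and "\<exists>x. \<forall>a<N. (\<Sum>b<N. (H a b - H a N * H N b / H N N) * x b) = w a - H N a * w N / H N N"
  shows "\<exists>x. \<forall>a<Suc N. (\<Sum>b<Suc N. H a b * x b) = w a"
proof -
  define h where "h = H N N"
  obtain x where x: "\<forall>a<N. (\<Sum>b<N. (H a b - H a N * H N b / h) * x b) = w a - H N a * w N / h"
    using assms(3) by (auto simp: h_def)
  define xN where "xN = (w N - (\<Sum>b<N. H N b * x b)) / h"
  have "(\<Sum>b<Suc N. H a b * (x(N := xN)) b) = w a" if "a < Suc N" for a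
  proof (cases "a = N")
    case False
    have "(\<Sum>b<N. (H a b - H a N * H N b / h) * x b) =
        (\<Sum>b<N. H a b * x b) - H a N / h * (\<Sum>b<N. H N b * x b)"
      by (simp add: algebra_simps sum_subtractf sum_divide_distrib sum_distrib_left)
    with x that False have "(\<Sum>b<N. H a b * x b) - H a N / h * (\<Sum>b<N. H N b * x b) = w a - H a N * w N / h"
      using sym[of N a] by simp
    then show ?thesis
      using pos by (simp add: xN_def h_def field_simps)
  qed (use pos in \<open>simp add: xN_def h_def field_simps\<close>)
  then show ?thesis
    by blast
qed

text \<open>Induction on N, eliminating the last variable: if its diagonal entry vanishes,
  so does its column; otherwise pass to the Schur complement.\<close>
lemma psd_solvable_if_orthogonal_to_isotropic:
  fixes H :: "nat \<Rightarrow> nat \<Rightarrow> real"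
  assumes "\<And>a b. H a b = H b a"
    and "\<And>y. quad_form N H y \<ge> 0"
    and "\<And>y. quad_form N H y = 0 \<Longrightarrow> (\<Sum>a<N. w a * y a) = 0"
  shows "\<exists>x. \<forall>a<N. (\<Sum>b<N. H a b * x b) = w a"
  using assms
proof (induction N arbitrary: H w)
  case 0
  then show ?case by simp
next
  case (Suc N)
  note sym = Suc.prems(1) and psd = Suc.prems(2) and iso = Suc.prems(3)
  define e :: "nat \<Rightarrow> real" where "e = (\<lambda>i. if i = N then 1 else 0)"
  have qe: "quad_form (Suc N) H e = H N N"
    unfolding e_def by (simp add: quad_form_unit)
  have update: "(\<Sum>a<Suc N. w a * (y(N := v)) a) = (\<Sum>a<N. w a * y a) + w N * v" for y v
    by simp
  consider "H N N = 0" | "H N N > 0"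
    using psd[of e] qe by linarith
  then show ?case
  proof cases
    case 1
    have drop_last: "quad_form (Suc N) H (y(N := 0)) = quad_form N H y" for y
      by (rule quad_form_Suc_update_zero[OF sym])
    have "H a N = 0" if "a \<le> N" for a
      using psd_zero_diagonal_imp_zero_row[OF sym psd 1] 1 that by (cases "a = N") auto
    moreover have "w N = 0"
      using iso[of e] qe 1 by (simp add: e_def)
    moreover have "\<exists>x. \<forall>a<N. (\<Sum>b<N. H a b * x b) = w a"
    proof (rule Suc.IH[OF sym])
      fix y
      show "quad_form N H y \<ge> 0"
        using psd[of "y(N := 0)"] drop_last[of y] by linarith
      assume "quad_form N H y = 0"
      then have "(\<Sum>a<Suc N. w a * (y(N := 0)) a) = 0"
        by (intro iso) (simp only: drop_last)
      then show "(\<Sum>a<N. w a * y a) = 0"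
        by (simp only: update)
    qed
    ultimately show ?thesis
      by (rule solvable_Suc_if_zero_last_column[OF sym])
  next
    case 2
    define S where "S = (\<lambda>a b. H a b - H a N * H N b / H N N)"
    have schur: "quad_form (Suc N) H (y(N := - (\<Sum>b<N. H N b * y b) / H N N)) = quad_form N S y" for y
      unfolding S_def by (rule quad_form_Suc_schur_complement[where H=H, OF sym 2])
    have "\<exists>x. \<forall>a<N. (\<Sum>b<N. S a b * x b) = w a - H N a * w N / H N N"
    proof (rule Suc.IH)
      show "S a b = S b a" for a b
        unfolding S_def by (simp add: sym mult_ac)
      show "quad_form N S y \<ge> 0" for y
        using psd schur by metis
      have "(\<Sum>a<N. w a * y a) + w N * (- (\<Sum>b<N. H N b * y b) / H N N) =
          (\<Sum>a<N. (w a - H N a * w N / H N N) * y a)" for y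
        by (simp add: algebra_simps sum_subtractf sum_distrib_left sum_divide_distrib)
      then show "(\<Sum>a<N. (w a - H N a * w N / H N N) * y a) = 0" if "quad_form N S y = 0" for y
        using iso schur that update by metis
    qed
    then show ?thesis
      unfolding S_def by (rule solvable_Suc_if_solvable_schur_complement[where H=H, OF sym 2])
  qed
qed

lemma in_range_if_orthogonal_to_isotropic:
  assumes sym: "\<And>a b. A a b = A b a" and "psd d A"
    and iso: "\<And>y. (\<Sum>a\<le>d. \<Sum>b\<le>d. y a * A a b * y b) = 0 \<Longrightarrow> (\<Sum>a\<le>d. v a * y a) = 0"
  shows "in_range d v A"
proof -
  have "\<exists>x. \<forall>a<Suc d. (\<Sum>b<Suc d. A a b * x b) = v a"
    using assms by (intro psd_solvable_if_orthogonal_to_isotropic)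
      (auto simp: quad_form_def psd_def lessThan_Suc_atMost)
  then show ?thesis
    unfolding in_range_def lessThan_Suc_atMost by (simp add: less_Suc_eq_le)
qed

lemma psd_cong:
  assumes "\<And>a b. a \<le> d \<Longrightarrow> b \<le> d \<Longrightarrow> A a b = B a b"
  shows "psd d A \<longleftrightarrow> psd d B"
proof -
  have "(\<Sum>a\<le>d. \<Sum>b\<le>d. x a * A a b * x b) = (\<Sum>a\<le>d. \<Sum>b\<le>d. x a * B a b * x b)" for x
    using assms by (intro sum.cong) auto
  then show ?thesis
    unfolding psd_def by simp
qed

lemma in_range_cong:
  assumes "\<And>a b. a \<le> d \<Longrightarrow> b \<le> d \<Longrightarrow> A a b = B a b" and "\<And>a. a \<le> d \<Longrightarrow> v a = w a"
  shows "in_range d v A \<longleftrightarrow> in_range d w B"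
proof -
  have "(\<Sum>b\<le>d. A a b * x b) = (\<Sum>b\<le>d. B a b * x b)" if "a \<le> d" for a x
    using assms(1) that by (intro sum.cong) auto
  then show ?thesis
    unfolding in_range_def using assms(2) by auto
qed

section \<open>Binomial mixtures and their truncated moments\<close>

definition prob_on_unit_interval :: "real measure \<Rightarrow> bool" where
  "prob_on_unit_interval \<Lambda> \<longleftrightarrow> prob_space \<Lambda> \<and> sets \<Lambda> = sets borel \<and> emeasure \<Lambda> {0..1} = 1"

lemma prob_on_unit_intervalD:
  assumes "prob_on_unit_interval \<Lambda>"
  shows "prob_space \<Lambda>" "sets \<Lambda> = sets borel" "emeasure \<Lambda> {0..1} = 1"
  using assms by (auto simp: prob_on_unit_interval_def)

lemma AE_prob_on_unit_interval:
  assumes "prob_on_unit_interval \<Lambda>"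
  shows "AE \<alpha> in \<Lambda>. 0 \<le> \<alpha> \<and> \<alpha> \<le> 1"
proof -
  interpret prob_space \<Lambda>
    using assms by (rule prob_on_unit_intervalD)
  have "{0..1} \<in> sets \<Lambda>"
    using prob_on_unit_intervalD(2)[OF assms] by simp
  moreover have "prob {0..1} = 1"
    using prob_on_unit_intervalD(3)[OF assms] by (simp add: emeasure_eq_measure)
  ultimately have "AE \<alpha> in \<Lambda>. \<alpha> \<in> {0..1}"
    using AE_in_set_eq_1 by blast
  then show ?thesis
    by simp
qed

lemma borel_measurable_prob_on_unit_interval:
  "prob_on_unit_interval \<Lambda> \<Longrightarrow> f \<in> borel_measurable borel \<Longrightarrow> f \<in> borel_measurable \<Lambda>"
  using prob_on_unit_intervalD(2) measurable_cong_sets by blast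

lemma integrable_prob_on_unit_interval:
  fixes f :: "real \<Rightarrow> real"
  assumes \<Lambda>: "prob_on_unit_interval \<Lambda>" and "f \<in> borel_measurable borel"
    and "\<And>x. 0 \<le> x \<Longrightarrow> x \<le> 1 \<Longrightarrow> \<bar>f x\<bar> \<le> B"
  shows "integrable \<Lambda> f"
proof -
  interpret prob_space \<Lambda>
    using \<Lambda> by (rule prob_on_unit_intervalD)
  show ?thesis
  proof (rule integrable_const_bound[where B=B])
    show "AE x in \<Lambda>. norm (f x) \<le> B"
      using AE_prob_on_unit_interval[OF \<Lambda>] by eventually_elim (use assms(3) in auto)
  qed (use assms in \<open>simp add: borel_measurable_prob_on_unit_interval\<close>)
qed

definition binomial_mixture :: "nat \<Rightarrow> nat pmf \<Rightarrow> real measure \<Rightarrow> bool" where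
  "binomial_mixture n \<pi> \<Lambda> \<longleftrightarrow> prob_on_unit_interval \<Lambda> \<and>
     (\<forall>j\<le>n. (\<integral>\<alpha>. \<alpha>^j * (1-\<alpha>)^(n-j) \<partial>\<Lambda>) = pmf \<pi> j / real (n choose j))"

text \<open>The atom of a mixing measure at \<alpha> = 1 only contributes to the moment of \<alpha>^n. Removing it
  gives the top entry c \<le> \<pi>(n) of \<mu>(c), and is needed for the range condition.\<close>
definition bern_trunc :: "nat \<Rightarrow> nat \<Rightarrow> real \<Rightarrow> real" where
  "bern_trunc n j \<alpha> = (if 0 \<le> \<alpha> \<and> \<alpha> < 1 then \<alpha>^j * (1-\<alpha>)^(n-j) else 0)"

definition bern_comb :: "nat \<Rightarrow> (nat \<Rightarrow> real) \<Rightarrow> real \<Rightarrow> real" where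
  "bern_comb d x \<alpha> = (\<Sum>a\<le>d. x a * (\<alpha>^a * (1-\<alpha>)^(d-a)))"

lemma bern_trunc_nonneg: "bern_trunc n j \<alpha> \<ge> 0"
  unfolding bern_trunc_def by auto

lemma bern_trunc_le_1: "bern_trunc n j \<alpha> \<le> 1"
  unfolding bern_trunc_def by (auto intro!: mult_le_one power_le_one)

lemma bern_trunc_measurable [measurable]: "bern_trunc n j \<in> borel_measurable borel"
  unfolding bern_trunc_def by measurable

lemma integrable_bern_trunc: "prob_on_unit_interval \<Lambda> \<Longrightarrow> integrable \<Lambda> (bern_trunc n j)"
  by (rule integrable_prob_on_unit_interval[where B=1])
    (auto simp: bern_trunc_nonneg bern_trunc_le_1 abs_le_iff intro: order.trans[OF _ bern_trunc_nonneg])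

lemma hankel_form_bern_trunc:
  assumes "e + 2*d \<le> n"
  shows "(\<Sum>a\<le>d. \<Sum>b\<le>d. x a * bern_trunc n (a+b+e) \<alpha> * x b) =
    (if 0 \<le> \<alpha> \<and> \<alpha> < 1 then \<alpha>^e * (1-\<alpha>)^(n-2*d-e) * (bern_comb d x \<alpha>)^2 else 0)"
proof (cases "0 \<le> \<alpha> \<and> \<alpha> < 1")
  case True
  have split: "\<alpha>^(a+b+e) * (1-\<alpha>)^(n-(a+b+e)) =
      \<alpha>^e * (1-\<alpha>)^(n-2*d-e) * (\<alpha>^a * (1-\<alpha>)^(d-a)) * (\<alpha>^b * (1-\<alpha>)^(d-b))"
    if "a \<le> d" "b \<le> d" for a b
  proof -
    have "n - (a+b+e) = (n-2*d-e) + (d-a) + (d-b)"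
      using that assms by arith
    then show ?thesis by (simp add: power_add mult_ac)
  qed
  have "(\<Sum>a\<le>d. \<Sum>b\<le>d. x a * bern_trunc n (a+b+e) \<alpha> * x b) = (\<Sum>a\<le>d. \<Sum>b\<le>d.
      \<alpha>^e * (1-\<alpha>)^(n-2*d-e) * ((x a * (\<alpha>^a * (1-\<alpha>)^(d-a))) * (x b * (\<alpha>^b * (1-\<alpha>)^(d-b)))))"
    using True by (intro sum.cong refl) (simp add: bern_trunc_def split mult_ac)
  also have "\<dots> = \<alpha>^e * (1-\<alpha>)^(n-2*d-e) * (bern_comb d x \<alpha>)^2"
    unfolding bern_comb_def power2_eq_square sum_product by (simp add: sum_distrib_left)
  finally show ?thesis
    using True by simp
qed (auto simp: bern_trunc_def)

lemma psd_hankel_bern_trunc_moments: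
  assumes \<Lambda>: "prob_on_unit_interval \<Lambda>" and "e + 2*d \<le> n"
  shows "psd d (hankel d (\<lambda>i. \<integral>\<alpha>. bern_trunc n (i + e) \<alpha> \<partial>\<Lambda>))"
  unfolding psd_def hankel_def
proof
  fix x :: "nat \<Rightarrow> real"
  have "(\<Sum>a\<le>d. \<Sum>b\<le>d. x a * (\<integral>\<alpha>. bern_trunc n (a + b + e) \<alpha> \<partial>\<Lambda>) * x b) =
      (\<integral>\<alpha>. (\<Sum>a\<le>d. \<Sum>b\<le>d. x a * bern_trunc n (a+b+e) \<alpha> * x b) \<partial>\<Lambda>)"
    using integrable_bern_trunc[OF \<Lambda>] by simp
  also have "\<dots> \<ge> 0"
    using assms(2) by (intro integral_nonneg_AE AE_I2) (simp add: hankel_form_bern_trunc)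
  finally show "0 \<le> (\<Sum>a\<le>d. \<Sum>b\<le>d. x a * (\<integral>\<alpha>. bern_trunc n (a + b + e) \<alpha> \<partial>\<Lambda>) * x b)" .
qed

lemma linear_form_bern_trunc:
  assumes "n = e + 2*d + 1"
  shows "(\<Sum>a\<le>d. y a * bern_trunc n (e+d+1+a) \<alpha>) =
    (if 0 \<le> \<alpha> \<and> \<alpha> < 1 then \<alpha>^(e+d+1) * bern_comb d y \<alpha> else 0)"
proof (cases "0 \<le> \<alpha> \<and> \<alpha> < 1")
  case True
  have "n - (e+d+1+a) = d - a" if "a \<le> d" for a
    using that assms by simp
  then show ?thesis
    using True by (simp add: bern_trunc_def bern_comb_def sum_distrib_left power_add mult_ac)
qed (auto simp: bern_trunc_def)

text \<open>The isotropic vectors of the Hankel form are the combinations whose Bernstein sum vanishes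
  \<Lambda>-a.e. on (0,1); so they annihilate the next moments as well.\<close>
lemma in_range_hankel_bern_trunc_moments:
  assumes \<Lambda>: "prob_on_unit_interval \<Lambda>" and n: "n = e + 2*d + 1"
  shows "in_range d (\<lambda>i. \<integral>\<alpha>. bern_trunc n (e + d + 1 + i) \<alpha> \<partial>\<Lambda>)
    (hankel d (\<lambda>i. \<integral>\<alpha>. bern_trunc n (i + e) \<alpha> \<partial>\<Lambda>))"
proof (rule in_range_if_orthogonal_to_isotropic)
  show "hankel d m a b = hankel d m b a" for m a b
    by (simp add: hankel_def add.commute)
  show "psd d (hankel d (\<lambda>i. \<integral>\<alpha>. bern_trunc n (i + e) \<alpha> \<partial>\<Lambda>))"
    using n by (intro psd_hankel_bern_trunc_moments[OF \<Lambda>]) simp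
  fix y
  define F where "F \<alpha> = (\<Sum>a\<le>d. \<Sum>b\<le>d. y a * bern_trunc n (a+b+e) \<alpha> * y b)" for \<alpha>
  have F: "F \<alpha> = (if 0 \<le> \<alpha> \<and> \<alpha> < 1 then \<alpha>^e * (1-\<alpha>) * (bern_comb d y \<alpha>)^2 else 0)" for \<alpha>
    unfolding F_def using hankel_form_bern_trunc[of e d n y \<alpha>] n by simp
  assume "(\<Sum>a\<le>d. \<Sum>b\<le>d. y a * hankel d (\<lambda>i. \<integral>\<alpha>. bern_trunc n (i + e) \<alpha> \<partial>\<Lambda>) a b * y b) = 0"
  then have "(\<integral>\<alpha>. F \<alpha> \<partial>\<Lambda>) = 0"
    using integrable_bern_trunc[OF \<Lambda>] by (simp add: F_def hankel_def add.commute add.left_commute)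
  moreover have "integrable \<Lambda> F"
    unfolding F_def[abs_def] using integrable_bern_trunc[OF \<Lambda>] by simp
  ultimately have "AE \<alpha> in \<Lambda>. F \<alpha> = 0"
    by (subst (asm) integral_nonneg_eq_0_iff_AE) (auto simp: F)
  then have "AE \<alpha> in \<Lambda>. (\<Sum>a\<le>d. y a * bern_trunc n (e+d+1+a) \<alpha>) = 0"
  proof eventually_elim
    case (elim \<alpha>)
    then show ?case
      unfolding linear_form_bern_trunc[OF n] by (auto simp: F)
  qed
  then have "(\<integral>\<alpha>. (\<Sum>a\<le>d. y a * bern_trunc n (e+d+1+a) \<alpha>) \<partial>\<Lambda>) = 0"
    by (rule integral_eq_zero_AE)
  then show "(\<Sum>a\<le>d. (\<integral>\<alpha>. bern_trunc n (e + d + 1 + a) \<alpha> \<partial>\<Lambda>) * y a) = 0"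
    using integrable_bern_trunc[OF \<Lambda>] by (simp add: mult.commute)
qed

lemma binomial_mixtureD:
  assumes "binomial_mixture n \<pi> \<Lambda>"
  shows "prob_on_unit_interval \<Lambda>"
    and "j \<le> n \<Longrightarrow> (\<integral>\<alpha>. \<alpha>^j * (1-\<alpha>)^(n-j) \<partial>\<Lambda>) = pmf \<pi> j / real (n choose j)"
  using assms by (auto simp: binomial_mixture_def)

lemma mu_vec_bern_trunc_moments:
  assumes mix: "binomial_mixture n \<pi> \<Lambda>" and "j \<le> n"
  shows "mu_vec n \<pi> (\<integral>\<alpha>. bern_trunc n n \<alpha> \<partial>\<Lambda>) j = (\<integral>\<alpha>. bern_trunc n j \<alpha> \<partial>\<Lambda>)"
proof (cases "j < n")
  case True
  note \<Lambda> = binomial_mixtureD(1)[OF mix]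
  have "(\<integral>\<alpha>. \<alpha>^j * (1-\<alpha>)^(n-j) \<partial>\<Lambda>) = (\<integral>\<alpha>. bern_trunc n j \<alpha> \<partial>\<Lambda>)"
  proof (rule integral_cong_AE)
    show "AE \<alpha> in \<Lambda>. \<alpha>^j * (1-\<alpha>)^(n-j) = bern_trunc n j \<alpha>"
      using AE_prob_on_unit_interval[OF \<Lambda>] by eventually_elim (use True in \<open>auto simp: bern_trunc_def\<close>)
  qed (auto intro: borel_measurable_prob_on_unit_interval[OF \<Lambda>])
  then show ?thesis
    using binomial_mixtureD(2)[OF mix] True by (simp add: mu_vec_def)
qed (use assms in \<open>simp add: mu_vec_def\<close>)

lemma bern_trunc_top_moment_bounds:
  assumes mix: "binomial_mixture n \<pi> \<Lambda>"
  shows "(\<integral>\<alpha>. bern_trunc n n \<alpha> \<partial>\<Lambda>) \<in> {0..pmf \<pi> n}"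
proof -
  note \<Lambda> = binomial_mixtureD(1)[OF mix]
  have "(\<integral>\<alpha>. bern_trunc n n \<alpha> \<partial>\<Lambda>) \<le> (\<integral>\<alpha>. \<alpha>^n * (1-\<alpha>)^(n-n) \<partial>\<Lambda>)"
  proof (rule integral_mono_AE)
    show "integrable \<Lambda> (\<lambda>\<alpha>::real. \<alpha>^n * (1-\<alpha>)^(n-n))"
      by (rule integrable_prob_on_unit_interval[OF \<Lambda>, where B=1]) (auto intro: power_le_one)
    show "AE \<alpha> in \<Lambda>. bern_trunc n n \<alpha> \<le> \<alpha>^n * (1-\<alpha>)^(n-n)"
      using AE_prob_on_unit_interval[OF \<Lambda>] by eventually_elim (auto simp: bern_trunc_def)
  qed (rule integrable_bern_trunc[OF \<Lambda>])
  also have "\<dots> = pmf \<pi> n"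
    using binomial_mixtureD(2)[OF mix, of n] by simp
  finally show ?thesis
    by (auto intro!: integral_nonneg_AE AE_I2 bern_trunc_nonneg)
qed

lemma binomial_mixture_imp_psd:
  assumes mix: "binomial_mixture n \<pi> \<Lambda>" and "e + 2*d \<le> n"
  shows "psd d (hankel d (\<lambda>i. mu_vec n \<pi> (\<integral>\<alpha>. bern_trunc n n \<alpha> \<partial>\<Lambda>) (i + e)))"
  using psd_hankel_bern_trunc_moments[OF binomial_mixtureD(1)[OF mix] assms(2)] assms
  by (subst psd_cong) (auto simp: hankel_def mu_vec_bern_trunc_moments)

lemma binomial_mixture_imp_in_range:
  assumes mix: "binomial_mixture n \<pi> \<Lambda>" and n: "n = e + 2*d + 1"
  shows "in_range d (\<lambda>i. mu_vec n \<pi> (\<integral>\<alpha>. bern_trunc n n \<alpha> \<partial>\<Lambda>) (e + d + 1 + i))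
    (hankel d (\<lambda>i. mu_vec n \<pi> (\<integral>\<alpha>. bern_trunc n n \<alpha> \<partial>\<Lambda>) (i + e)))"
  using in_range_hankel_bern_trunc_moments[OF binomial_mixtureD(1)[OF mix] n] assms
  by (subst in_range_cong) (auto simp: hankel_def mu_vec_bern_trunc_moments)

section \<open>Polynomials nonnegative on the half-line\<close>

inductive halfline_sos :: "nat \<Rightarrow> real poly \<Rightarrow> bool" for m where
  zero: "halfline_sos m 0"
| square: "2 * degree f \<le> m \<Longrightarrow> halfline_sos m (f * f)"
| x_square: "2 * degree g + 1 \<le> m \<Longrightarrow> halfline_sos m ([:0, 1:] * (g * g))"
| add: "halfline_sos m p \<Longrightarrow> halfline_sos m q \<Longrightarrow> halfline_sos m (p + q)"

lemma halfline_sos_mono: "halfline_sos m p \<Longrightarrow> m \<le> m' \<Longrightarrow> halfline_sos m' p"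
proof (induction rule: halfline_sos.induct)
  case (square f)
  then show ?case by (intro halfline_sos.square) simp
next
  case (x_square g)
  then show ?case by (intro halfline_sos.x_square) simp
qed (auto intro: halfline_sos.zero halfline_sos.add)

lemma halfline_sos_const: "c \<ge> 0 \<Longrightarrow> halfline_sos m [:c:]"
  using halfline_sos.square[of "[:sqrt c:]" m] by simp

lemma halfline_sos_mult_x: "halfline_sos m p \<Longrightarrow> halfline_sos (m + 1) ([:0, 1:] * p)"
proof (induction rule: halfline_sos.induct)
  case (square f)
  then show ?case by (intro halfline_sos.x_square) simp
next
  case (x_square g)
  have "degree ([:0, 1:] * g) \<le> 1 + degree g"
    using degree_mult_le[of "[:0, 1:]" g] by simp
  then have "halfline_sos (m + 1) (([:0, 1:] * g) * ([:0, 1:] * g))"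
    using x_square by (intro halfline_sos.square) simp
  then show ?case by (simp add: mult_ac)
next
  case (add p q)
  show ?case
    unfolding distrib_left by (rule halfline_sos.add[OF add.IH])
qed (simp add: halfline_sos.zero)

lemma halfline_sos_mult_square:
  assumes "halfline_sos m p" "degree r \<le> 1"
  shows "halfline_sos (m + 2) (r * r * p)"
  using assms(1)
proof (induction rule: halfline_sos.induct)
  case (square f)
  have "degree (r * f) \<le> 1 + degree f"
    using degree_mult_le[of r f] assms(2) by simp
  then have "halfline_sos (m + 2) ((r * f) * (r * f))"
    using square by (intro halfline_sos.square) simp
  then show ?case by (simp add: mult_ac)
next
  case (x_square g)
  have "degree (r * g) \<le> 1 + degree g"
    using degree_mult_le[of r g] assms(2) by simp
  then have "halfline_sos (m + 2) ([:0, 1:] * ((r * g) * (r * g)))"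
    using x_square by (intro halfline_sos.x_square) simp
  then show ?case by (simp add: mult_ac)
next
  case (add p q)
  show ?case
    unfolding distrib_left by (rule halfline_sos.add[OF add.IH])
qed (simp add: halfline_sos.zero)

lemma poly_nonneg_at_right_limit:
  fixes p :: "real poly"
  assumes "\<And>t. t > a \<Longrightarrow> poly p t \<ge> 0"
  shows "poly p a \<ge> 0"
proof (rule tendsto_lowerbound)
  show "(poly p \<longlongrightarrow> poly p a) (at_right a)"
    by (intro tendsto_poly tendsto_ident_at)
  show "\<forall>\<^sub>F t in at_right a. 0 \<le> poly p t"
    using eventually_at_right_less[of a] by eventually_elim (use assms in auto)
qed simp

lemma degree_lead_coeff_minus_const:
  fixes q :: "real poly"
  assumes "degree q \<ge> 1"
  shows "degree (q - [:c:]) = degree q" "lead_coeff (q - [:c:]) = lead_coeff q"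
proof -
  have eq: "q - [:c:] = [:- c:] + q"
    by simp
  have "degree [:- c:] < degree q"
    using assms by simp
  then show "degree (q - [:c:]) = degree q" "lead_coeff (q - [:c:]) = lead_coeff q"
    unfolding eq by (rule degree_add_eq_right, rule lead_coeff_add_le)
qed

lemma lead_coeff_pos_if_nonneg_on_halfline:
  fixes q :: "real poly"
  assumes "degree q \<ge> 1" "\<And>t. t \<ge> 0 \<Longrightarrow> poly q t \<ge> 0"
  shows "lead_coeff q > 0"
proof (rule ccontr)
  assume "\<not> lead_coeff q > 0"
  moreover have "lead_coeff q \<noteq> 0"
    using assms(1) by auto
  ultimately have "lead_coeff q < 0"
    by linarith
  then have "lead_coeff (- q) > 0"
    by simp
  then obtain N where N: "\<forall>x\<ge>N. poly (- q) x \<ge> lead_coeff (- q)"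
    using poly_pinfty_gt_lc by blast
  have "poly (- q) (max N 0) > 0"
    using N[rule_format, of "max N 0"] \<open>lead_coeff (- q) > 0\<close> by simp
  then have "poly q (max N 0) < 0"
    by simp
  with assms(2)[of "max N 0"] show False
    by simp
qed

lemma poly_attains_min_on_halfline:
  fixes q :: "real poly"
  assumes "degree q \<ge> 1" "\<And>t. t \<ge> 0 \<Longrightarrow> poly q t \<ge> 0"
  obtains t0 where "t0 \<ge> 0" "\<And>t. t \<ge> 0 \<Longrightarrow> poly q t0 \<le> poly q t"
proof -
  define q' where "q' = q - [:poly q 0:]"
  have "lead_coeff q' > 0"
    unfolding q'_def using degree_lead_coeff_minus_const[OF assms(1)]
      lead_coeff_pos_if_nonneg_on_halfline[OF assms] by simp
  then obtain R where R: "\<forall>x\<ge>R. poly q' x \<ge> lead_coeff q'"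
    using poly_pinfty_gt_lc by blast
  have far: "poly q 0 \<le> poly q x" if "x \<ge> max R 0" for x
    using R that \<open>lead_coeff q' > 0\<close> by (fastforce simp: q'_def)
  have "continuous_on {0..max R 0} (poly q)"
    by (rule continuous_at_imp_continuous_on) simp
  then obtain t0 where t0: "t0 \<in> {0..max R 0}" "\<And>y. y \<in> {0..max R 0} \<Longrightarrow> poly q t0 \<le> poly q y"
    using continuous_attains_inf[of "{0..max R 0}" "poly q"] by auto
  show ?thesis
  proof (rule that)
    show "t0 \<ge> 0" using t0 by simp
    fix t :: real assume "t \<ge> 0"
    then show "poly q t0 \<le> poly q t"
      using t0 far[of t] by (cases "t \<le> max R 0") force+
  qed
qed

lemma nonneg_on_halfline_root_at_zero:
  fixes p :: "real poly"
  assumes nonneg: "\<And>t. t \<ge> 0 \<Longrightarrow> poly p t \<ge> 0" and "poly p 0 = 0" "p \<noteq> 0"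
  obtains p1 where "p = [:0, 1:] * p1" "degree p = degree p1 + 1" "\<And>t. t \<ge> 0 \<Longrightarrow> poly p1 t \<ge> 0"
proof -
  obtain p1 where p1: "p = [:0, 1:] * p1"
    using \<open>poly p 0 = 0\<close> poly_eq_0_iff_dvd[of p 0] by (auto elim: dvdE)
  with \<open>p \<noteq> 0\<close> have "degree p = degree p1 + 1"
    by (simp add: degree_mult_eq)
  moreover have "poly p1 t \<ge> 0" if "t \<ge> 0" for t
  proof (rule poly_nonneg_at_right_limit)
    fix s :: real assume "s > t"
    with that nonneg[of s] p1 show "poly p1 s \<ge> 0"
      by (simp add: zero_le_mult_iff)
  qed
  ultimately show ?thesis
    using p1 that by blast
qed

text \<open>A zero in the interior of the half-line is a local minimum, hence a double root.\<close>
lemma nonneg_on_halfline_root_positive: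
  fixes p :: "real poly"
  assumes nonneg: "\<And>t. t \<ge> 0 \<Longrightarrow> poly p t \<ge> 0" and "poly p t0 = 0" "t0 > 0" "p \<noteq> 0"
  obtains p2 where "p = [:- t0, 1:] * [:- t0, 1:] * p2" "degree p = degree p2 + 2"
    "\<And>t. t \<ge> 0 \<Longrightarrow> poly p2 t \<ge> 0"
proof -
  define r where "r = [:- t0, 1:]"
  have "poly (pderiv p) t0 = 0"
  proof (rule DERIV_local_min)
    show "DERIV (poly p) t0 :> poly (pderiv p) t0" by simp
    show "\<forall>y. \<bar>t0 - y\<bar> < t0 \<longrightarrow> poly p t0 \<le> poly p y"
      using nonneg \<open>poly p t0 = 0\<close> by auto
  qed fact
  obtain p1 where p1: "p = r * p1"
    using \<open>poly p t0 = 0\<close> poly_eq_0_iff_dvd[of p t0] by (auto elim: dvdE simp: r_def)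
  have "pderiv p = r * pderiv p1 + p1 * pderiv r"
    unfolding p1 by (rule pderiv_mult)
  then have "poly p1 t0 = 0"
    using \<open>poly (pderiv p) t0 = 0\<close> by (simp add: r_def pderiv_pCons)
  then obtain p2 where p2: "p1 = r * p2"
    using poly_eq_0_iff_dvd[of p1 t0] by (auto elim: dvdE simp: r_def)
  have pr: "p = r * r * p2"
    using p1 p2 by (simp add: mult_ac)
  have "p2 \<noteq> 0" "r * r \<noteq> 0"
    using pr \<open>p \<noteq> 0\<close> by auto
  moreover have "degree (r * r) = 2"
    by (simp add: r_def)
  ultimately have "degree p = degree p2 + 2"
    unfolding pr using degree_mult_eq[of "r * r" p2] by simp
  moreover have "poly p2 t \<ge> 0" if "t \<ge> 0" for t
  proof -
    have off_t0: "poly p2 s \<ge> 0" if "s \<ge> 0" "s \<noteq> t0" for s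
    proof -
      have "poly p s = (s - t0)\<^sup>2 * poly p2 s"
        unfolding pr poly_mult r_def by (simp add: power2_eq_square)
      moreover have "(s - t0)\<^sup>2 > 0"
        using that by simp
      ultimately show ?thesis
        using nonneg[of s] that by (simp add: zero_le_mult_iff)
    qed
    show ?thesis
    proof (cases "t = t0")
      case True
      show ?thesis
        unfolding True by (rule poly_nonneg_at_right_limit) (use off_t0 \<open>t0 > 0\<close> in auto)
    qed (use off_t0 that in auto)
  qed
  ultimately show ?thesis
    using pr that unfolding r_def by blast
qed

text \<open>Subtract the minimum over [0,\<infinity>): the remainder has a root at 0 or a double root in
  (0,\<infinity>), and the cofactor is again nonnegative.\<close>
lemma halfline_sos_if_nonneg:
  fixes q :: "real poly"
  assumes "\<And>t. t \<ge> 0 \<Longrightarrow> poly q t \<ge> 0"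
  shows "halfline_sos (degree q) q"
  using assms
proof (induction "degree q" arbitrary: q rule: less_induct)
  case less
  show ?case
  proof (cases "degree q = 0")
    case True
    then obtain c where "q = [:c:]"
      by (metis degree_eq_zeroE)
    with less.prems[of 0] show ?thesis
      by (simp add: halfline_sos_const)
  next
    case False
    then have dq: "degree q \<ge> 1" by simp
    obtain t0 where t0: "t0 \<ge> 0" "\<And>t. t \<ge> 0 \<Longrightarrow> poly q t0 \<le> poly q t"
      using poly_attains_min_on_halfline[OF dq less.prems] by blast
    define p where "p = q - [:poly q t0:]"
    have dp: "degree p = degree q"
      unfolding p_def by (rule degree_lead_coeff_minus_const[OF dq])
    then have "p \<noteq> 0"
      using dq by auto
    have p_nonneg: "poly p t \<ge> 0" if "t \<ge> 0" for t
      using t0 that by (simp add: p_def)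
    have "poly p t0 = 0"
      by (simp add: p_def)
    have "halfline_sos (degree q) p"
    proof (cases "t0 = 0")
      case True
      then have "poly p 0 = 0"
        using \<open>poly p t0 = 0\<close> by simp
      then obtain p1 where p1: "p = [:0, 1:] * p1" "degree p = degree p1 + 1"
        "\<And>t. t \<ge> 0 \<Longrightarrow> poly p1 t \<ge> 0"
        using nonneg_on_halfline_root_at_zero[OF p_nonneg _ \<open>p \<noteq> 0\<close>] by blast
      have "halfline_sos (degree p1) p1"
        using p1(2,3) dp by (intro less.hyps) auto
      then have "halfline_sos (degree p1 + 1) ([:0, 1:] * p1)"
        by (rule halfline_sos_mult_x)
      then show ?thesis
        using p1(1,2) dp by simp
    next
      case False
      with t0(1) have "t0 > 0"
        by simp
      then obtain p2 where p2: "p = [:- t0, 1:] * [:- t0, 1:] * p2" "degree p = degree p2 + 2"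
        "\<And>t. t \<ge> 0 \<Longrightarrow> poly p2 t \<ge> 0"
        using nonneg_on_halfline_root_positive[OF p_nonneg \<open>poly p t0 = 0\<close> _ \<open>p \<noteq> 0\<close>] by blast
      have "halfline_sos (degree p2) p2"
        using p2(2,3) dp by (intro less.hyps) auto
      then have "halfline_sos (degree p2 + 2) ([:- t0, 1:] * [:- t0, 1:] * p2)"
        by (rule halfline_sos_mult_square) simp
      then show ?thesis
        using p2(1,2) dp by simp
    qed
    moreover have "halfline_sos (degree q) [:poly q t0:]"
      using less.prems t0(1) by (intro halfline_sos_const) simp
    ultimately have "halfline_sos (degree q) (p + [:poly q t0:])"
      by (rule halfline_sos.add)
    then show ?thesis
      by (simp add: p_def)
  qed
qed

section \<open>The moment functional\<close>

definition riesz_functional :: "nat \<Rightarrow> (nat \<Rightarrow> real) \<Rightarrow> real poly \<Rightarrow> real" where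
  "riesz_functional n \<mu> q = (\<Sum>j\<le>n. coeff q j * \<mu> j)"

lemma riesz_functional_add:
  "riesz_functional n \<mu> (p + q) = riesz_functional n \<mu> p + riesz_functional n \<mu> q"
  by (simp add: riesz_functional_def algebra_simps sum.distrib)

lemma riesz_functional_monom_mult:
  fixes p q :: "real poly"
  assumes "degree p \<le> D1" "degree q \<le> D2" "D1 + D2 + e \<le> n"
  shows "riesz_functional n \<mu> (monom 1 e * (p * q)) =
    (\<Sum>a\<le>D1. \<Sum>b\<le>D2. coeff p a * coeff q b * \<mu> (a + b + e))"
proof -
  have "p * q = (\<Sum>a\<le>D1. monom (coeff p a) a) * (\<Sum>b\<le>D2. monom (coeff q b) b)"
    using poly_as_sum_of_monoms'[OF assms(1)] poly_as_sum_of_monoms'[OF assms(2)] by simp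
  also have "\<dots> = (\<Sum>a\<le>D1. \<Sum>b\<le>D2. monom (coeff p a) a * monom (coeff q b) b)"
    by (rule sum_product)
  finally have "monom 1 e * (p * q) = (\<Sum>a\<le>D1. \<Sum>b\<le>D2. monom (coeff p a * coeff q b) (a + b + e))"
    by (simp add: sum_distrib_left mult_monom add.commute add.left_commute)
  then have "riesz_functional n \<mu> (monom 1 e * (p * q)) =
      (\<Sum>j\<le>n. \<Sum>a\<le>D1. \<Sum>b\<le>D2. (if a + b + e = j then coeff p a * coeff q b * \<mu> j else 0))"
    by (simp add: riesz_functional_def coeff_sum sum_distrib_right if_distrib[of "\<lambda>x. x * _"]
        cong: if_cong)
  also have "\<dots> = (\<Sum>a\<le>D1. \<Sum>b\<le>D2. \<Sum>j\<le>n. (if a + b + e = j then coeff p a * coeff q b * \<mu> j else 0))"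
    by (subst sum.swap) (rule sum.cong[OF refl], rule sum.swap)
  also have "\<dots> = (\<Sum>a\<le>D1. \<Sum>b\<le>D2. coeff p a * coeff q b * \<mu> (a + b + e))"
    using assms(3) by (intro sum.cong refl) (auto simp: sum.delta)
  finally show ?thesis .
qed

lemma riesz_functional_nonneg_halfline_sos:
  assumes psd0: "psd k (hankel k \<mu>)" and psd1: "psd d (hankel d (shiftF \<mu>))"
    and n: "2*k \<le> n" "2*d + 1 \<le> n" "n \<le> 2*k + 1" "n \<le> 2*d + 2"
    and "halfline_sos m q" "m \<le> n"
  shows "riesz_functional n \<mu> q \<ge> 0"
  using assms(7,8)
proof (induction rule: halfline_sos.induct)
  case zero
  then show ?case by (simp add: riesz_functional_def)
next
  case (square f)
  then have "degree f \<le> k"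
    using n by linarith
  then have "riesz_functional n \<mu> (monom 1 0 * (f * f)) =
      (\<Sum>a\<le>k. \<Sum>b\<le>k. coeff f a * hankel k \<mu> a b * coeff f b)"
    using n by (subst riesz_functional_monom_mult) (auto simp: hankel_def mult_ac)
  then show ?case
    using psd0 unfolding psd_def by (simp add: monom_0 one_pCons)
next
  case (x_square g)
  then have "degree g \<le> d"
    using n by linarith
  then have "riesz_functional n \<mu> (monom 1 1 * (g * g)) =
      (\<Sum>a\<le>d. \<Sum>b\<le>d. coeff g a * hankel d (shiftF \<mu>) a b * coeff g b)"
    using n by (subst riesz_functional_monom_mult) (auto simp: hankel_def shiftF_def mult_ac)
  then show ?case
    using psd1 unfolding psd_def by (simp add: monom_altdef)
next
  case (add p q)
  then show ?case by (simp add: riesz_functional_add)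
qed

lemma power_eq_bernstein_homogenized:
  fixes t :: real
  assumes "t \<ge> 0" "j \<le> n"
  shows "t^j = (1 + t)^n * ((t / (1 + t))^j * (1 - t / (1 + t))^(n - j))"
proof -
  have "1 + t \<noteq> 0" "1 - t / (1 + t) = 1 / (1 + t)"
    using assms by (auto simp: field_simps)
  moreover have "(1 + t)^j * (1 + t)^(n - j) = (1 + t)^n"
    using assms(2) by (simp flip: power_add)
  ultimately show ?thesis
    by (simp add: power_divide)
qed

lemma poly_nonneg_on_halfline_if_bernstein_nonneg:
  fixes y :: "nat \<Rightarrow> real"
  assumes y: "\<And>\<alpha>. 0 \<le> \<alpha> \<Longrightarrow> \<alpha> \<le> 1 \<Longrightarrow> (\<Sum>j\<le>n. y j * (\<alpha>^j * (1-\<alpha>)^(n-j))) \<ge> 0"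
    and "t \<ge> 0"
  shows "poly (\<Sum>j\<le>n. monom (y j) j) t \<ge> 0"
proof -
  have "poly (\<Sum>j\<le>n. monom (y j) j) t = (\<Sum>j\<le>n. y j * t^j)"
    by (simp add: poly_sum poly_monom)
  also have "\<dots> = (1 + t)^n * (\<Sum>j\<le>n. y j * ((t / (1 + t))^j * (1 - t / (1 + t))^(n - j)))"
    unfolding sum_distrib_left using \<open>t \<ge> 0\<close>
    by (intro sum.cong refl) (subst power_eq_bernstein_homogenized[of t], auto simp: mult_ac)
  also have "\<dots> \<ge> 0"
    using \<open>t \<ge> 0\<close> by (intro mult_nonneg_nonneg y) auto
  finally show ?thesis .
qed

text \<open>A combination of the \<alpha>^j (1-\<alpha>)^(n-j) nonnegative on [0,1] becomes, in t = \<alpha>/(1-\<alpha>), a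
  polynomial nonnegative on [0,\<infinity>), on which the Hankel conditions make the Riesz functional of
  \<mu>(c) nonnegative. Its top coefficient is the value at \<alpha> = 1, so c \<le> \<pi>(n) can be used.\<close>
lemma nonneg_on_unit_interval_imp_moment_sum_nonneg:
  fixes \<pi> :: "nat pmf"
  assumes c: "c \<in> {0..pmf \<pi> n}"
    and psd0: "psd k (hankel k (mu_vec n \<pi> c))" and psd1: "psd d (hankel d (shiftF (mu_vec n \<pi> c)))"
    and n: "2*k \<le> n" "2*d + 1 \<le> n" "n \<le> 2*k + 1" "n \<le> 2*d + 2"
    and y: "\<And>\<alpha>. 0 \<le> \<alpha> \<Longrightarrow> \<alpha> \<le> 1 \<Longrightarrow> (\<Sum>j\<le>n. y j * (\<alpha>^j * (1-\<alpha>)^(n-j))) \<ge> 0"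
  shows "(\<Sum>j\<le>n. y j * (pmf \<pi> j / real (n choose j))) \<ge> 0"
proof -
  define q where "q = (\<Sum>j\<le>n. monom (y j) j)"
  have "degree q \<le> n"
    unfolding q_def by (rule degree_sum_le) (auto intro: order.trans[OF degree_monom_le])
  then have "halfline_sos n q"
    using halfline_sos_if_nonneg halfline_sos_mono poly_nonneg_on_halfline_if_bernstein_nonneg[OF y]
    unfolding q_def by blast
  then have "riesz_functional n (mu_vec n \<pi> c) q \<ge> 0"
    using riesz_functional_nonneg_halfline_sos[OF psd0 psd1 n] by blast
  moreover have "riesz_functional n (mu_vec n \<pi> c) q = (\<Sum>j\<le>n. y j * mu_vec n \<pi> c j)"
    unfolding riesz_functional_def q_def by (intro sum.cong refl) (simp add: coeff_sum_monom)
  moreover have "(\<Sum>j\<le>n. y j * mu_vec n \<pi> c j) =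
      (\<Sum>j<n. y j * (pmf \<pi> j / real (n choose j))) + y n * c"
    by (simp add: lessThan_Suc_atMost[symmetric] mu_vec_def)
  moreover have "(\<Sum>j\<le>n. y j * (pmf \<pi> j / real (n choose j))) =
      (\<Sum>j<n. y j * (pmf \<pi> j / real (n choose j))) + y n * pmf \<pi> n"
    by (simp add: lessThan_Suc_atMost[symmetric])
  moreover have "y n * c \<le> y n * pmf \<pi> n"
    using y[of 1] c by (intro mult_left_mono) (simp_all add: lessThan_Suc_atMost[symmetric] power_0_left)
  ultimately show ?thesis
    by linarith
qed

section \<open>Distributions with prescribed Bernstein moments\<close>

definition clamp01 :: "real \<Rightarrow> real" where
  "clamp01 x = max 0 (min 1 x)"

definition bern_clamped :: "nat \<Rightarrow> nat \<Rightarrow> real \<Rightarrow> real" where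
  "bern_clamped n j x = clamp01 x ^ j * (1 - clamp01 x) ^ (n - j)"

lemma clamp01_bounds: "0 \<le> clamp01 x" "clamp01 x \<le> 1"
  unfolding clamp01_def by auto

lemma clamp01_id: "0 \<le> x \<Longrightarrow> x \<le> 1 \<Longrightarrow> clamp01 x = x"
  unfolding clamp01_def by auto

lemma clamp01_measurable [measurable]: "clamp01 \<in> borel_measurable borel"
  unfolding clamp01_def by measurable

lemma bern_clamped_id: "0 \<le> x \<Longrightarrow> x \<le> 1 \<Longrightarrow> bern_clamped n j x = x^j * (1-x)^(n-j)"
  unfolding bern_clamped_def by (simp add: clamp01_id)

lemma bern_clamped_nonneg: "0 \<le> bern_clamped n j x"
  unfolding bern_clamped_def using clamp01_bounds[of x] by simp

lemma bern_clamped_le_1: "bern_clamped n j x \<le> 1"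
  unfolding bern_clamped_def using clamp01_bounds[of x] by (intro mult_le_one power_le_one) auto

lemma bern_clamped_measurable [measurable]: "bern_clamped n j \<in> borel_measurable borel"
  unfolding bern_clamped_def by measurable

lemma isCont_bern_clamped: "isCont (bern_clamped n j) x"
  unfolding bern_clamped_def clamp01_def by (intro continuous_intros)

lemma bern_clamped_clamp: "bern_clamped n j (clamp01 x) = bern_clamped n j x"
  unfolding bern_clamped_def clamp01_def by auto

lemma integral_bern_clamped:
  assumes \<Lambda>: "prob_on_unit_interval \<Lambda>"
  shows "(\<integral>x. bern_clamped n j x \<partial>\<Lambda>) = (\<integral>x. x^j * (1-x)^(n-j) \<partial>\<Lambda>)"
proof (rule integral_cong_AE)
  show "AE x in \<Lambda>. bern_clamped n j x = x^j * (1-x)^(n-j)"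
    using AE_prob_on_unit_interval[OF \<Lambda>] by eventually_elim (simp add: bern_clamped_id)
qed (auto intro: borel_measurable_prob_on_unit_interval[OF \<Lambda>])

lemma prob_on_unit_interval_return: "0 \<le> a \<Longrightarrow> a \<le> 1 \<Longrightarrow> prob_on_unit_interval (return borel a)"
  by (simp add: prob_on_unit_interval_def prob_space_return)

definition point_mix :: "real \<Rightarrow> real \<Rightarrow> real measure \<Rightarrow> real measure" where
  "point_mix s a \<Lambda> = measure_pmf (bernoulli_pmf s) \<bind> (\<lambda>b. if b then return borel a else \<Lambda>)"

lemma point_mix:
  assumes \<Lambda>: "prob_on_unit_interval \<Lambda>" and a: "0 \<le> a" "a \<le> 1" and s: "0 \<le> s" "s \<le> 1"
  shows "prob_on_unit_interval (point_mix s a \<Lambda>)"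
    and "\<And>g. g \<in> borel_measurable borel \<Longrightarrow> (\<And>x. 0 \<le> g x) \<Longrightarrow> (\<And>x. g x \<le> 1) \<Longrightarrow>
          (\<integral>x. g x \<partial>point_mix s a \<Lambda>) = s * g a + (1 - s) * (\<integral>x. g x \<partial>\<Lambda>)"
proof -
  note \<Lambda>' = prob_on_unit_intervalD[OF \<Lambda>]
  define f where "f = (\<lambda>b. if b then return borel a else \<Lambda>)"
  have f_space: "f b \<in> space (prob_algebra borel)" for b
    using \<Lambda>' by (auto simp: f_def space_prob_algebra prob_space_return)
  then have f: "f \<in> measurable (measure_pmf (bernoulli_pmf s)) (prob_algebra borel)"
    by simp
  have f': "f \<in> measurable (measure_pmf (bernoulli_pmf s)) (subprob_algebra borel)"
    using f_space by (simp add: space_prob_algebra space_subprob_algebra prob_space_imp_subprob_space)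
  have pmf: "measure_pmf (bernoulli_pmf s) \<in> space (prob_algebra (measure_pmf (bernoulli_pmf s)))"
    by (simp add: space_prob_algebra prob_space_measure_pmf)
  have mix: "point_mix s a \<Lambda> = measure_pmf (bernoulli_pmf s) \<bind> f"
    unfolding point_mix_def f_def ..
  have sets: "sets (point_mix s a \<Lambda>) = sets borel"
    unfolding mix by (rule sets_bind'[OF pmf f])
  have "emeasure (point_mix s a \<Lambda>) {0..1} = (\<integral>\<^sup>+b. emeasure (f b) {0..1} \<partial>measure_pmf (bernoulli_pmf s))"
    unfolding mix by (rule emeasure_bind[OF _ f']) auto
  also have "\<dots> = 1"
    using s a \<Lambda>' by (simp add: f_def ennreal_plus[symmetric] del: ennreal_plus)
  finally show "prob_on_unit_interval (point_mix s a \<Lambda>)"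
    unfolding prob_on_unit_interval_def mix using prob_space_bind'[OF pmf f] sets mix by simp
  fix g :: "real \<Rightarrow> real"
  assume g: "g \<in> borel_measurable borel" "\<And>x. 0 \<le> g x" "\<And>x. g x \<le> 1"
  have int_g: "integrable \<Lambda> g"
    using g by (intro integrable_prob_on_unit_interval[OF \<Lambda>, where B=1]) auto
  have int_nonneg: "0 \<le> (\<integral>x. g x \<partial>\<Lambda>)"
    using g by (intro integral_nonneg_AE AE_I2) auto
  have "(\<integral>\<^sup>+x. ennreal (g x) \<partial>point_mix s a \<Lambda>) =
      (\<integral>\<^sup>+b. (\<integral>\<^sup>+x. ennreal (g x) \<partial>f b) \<partial>measure_pmf (bernoulli_pmf s))"
    unfolding mix by (rule nn_integral_bind[OF _ f']) (use g in simp)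
  also have "\<dots> = ennreal (g a) * s + (\<integral>\<^sup>+x. ennreal (g x) \<partial>\<Lambda>) * (1 - s)"
    using s g by (simp add: f_def nn_integral_return)
  also have "(\<integral>\<^sup>+x. ennreal (g x) \<partial>\<Lambda>) = ennreal (\<integral>x. g x \<partial>\<Lambda>)"
    by (rule nn_integral_eq_integral[OF int_g]) (use g in simp)
  also have "ennreal (g a) * s + ennreal (\<integral>x. g x \<partial>\<Lambda>) * (1 - s) =
      ennreal (s * g a + (1 - s) * (\<integral>x. g x \<partial>\<Lambda>))"
    using s g int_nonneg
    by (simp add: ennreal_mult'[symmetric] ennreal_plus[symmetric] mult.commute del: ennreal_plus)
  finally have nn: "(\<integral>\<^sup>+x. ennreal (g x) \<partial>point_mix s a \<Lambda>) = ennreal (s * g a + (1 - s) * (\<integral>x. g x \<partial>\<Lambda>))" .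
  have "(\<integral>x. g x \<partial>point_mix s a \<Lambda>) = enn2real (\<integral>\<^sup>+x. ennreal (g x) \<partial>point_mix s a \<Lambda>)"
    using g sets by (intro integral_eq_nn_integral) (auto simp: measurable_cong_sets[OF sets refl])
  also have "\<dots> = s * g a + (1 - s) * (\<integral>x. g x \<partial>\<Lambda>)"
    unfolding nn using s g int_nonneg by (intro enn2real_ennreal) simp
  finally show "(\<integral>x. g x \<partial>point_mix s a \<Lambda>) = s * g a + (1 - s) * (\<integral>x. g x \<partial>\<Lambda>)" .
qed

text \<open>A weak limit point given by Helly's theorem need not visibly live on [0,1]; its image
  under clamp01 does, and has the same integrals of the clamped Bernstein functions.\<close>
lemma prob_on_unit_interval_convergent_subseq:
  fixes L :: "nat \<Rightarrow> real measure"
  assumes L: "\<And>i. prob_on_unit_interval (L i)"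
  obtains r \<Lambda> where "strict_mono r" "prob_on_unit_interval \<Lambda>"
    "\<And>j. (\<lambda>i. \<integral>x. bern_clamped n j x \<partial>L (r i)) \<longlonglongrightarrow> (\<integral>x. bern_clamped n j x \<partial>\<Lambda>)"
proof -
  have distr: "real_distribution (L i)" for i
    using prob_on_unit_intervalD[OF L] by (simp add: real_distribution_def real_distribution_axioms_def)
  have "tight L"
    unfolding tight_def
  proof (intro conjI allI impI)
    fix \<epsilon> :: real assume "\<epsilon> > 0"
    have "measure (L i) {-1<..2} > 1 - \<epsilon>" for i
    proof -
      interpret real_distribution "L i" by (rule distr)
      have "measure (L i) {0..1} \<le> measure (L i) {-1<..2}"
        by (intro finite_measure_mono) auto
      then show ?thesis
        using prob_on_unit_intervalD(3)[OF L[of i]] \<open>\<epsilon> > 0\<close> by (simp add: emeasure_eq_measure)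
    qed
    then show "\<exists>a b. a < b \<and> (\<forall>i. measure (L i) {a<..b} > 1 - \<epsilon>)"
      by (intro exI[of _ "-1::real"] exI[of _ "2::real"]) auto
  qed (rule distr)
  from tight_imp_convergent_subsubsequence[OF this strict_mono_id]
  obtain r M where r: "strict_mono r" and M: "real_distribution M" and conv: "weak_conv_m (L \<circ> id \<circ> r) M"
    by blast
  interpret M: real_distribution M by (rule M)
  define \<Lambda> where "\<Lambda> = distr M borel clamp01"
  have clamp01_M: "clamp01 \<in> measurable M borel"
    by (simp add: measurable_cong_sets[OF M.events_eq_borel refl])
  have "emeasure \<Lambda> {0..1} = emeasure M (clamp01 -` {0..1} \<inter> space M)"
    unfolding \<Lambda>_def by (rule emeasure_distr[OF clamp01_M]) simp
  also have "clamp01 -` {0..1} \<inter> space M = space M"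
    using clamp01_bounds by auto
  also have "emeasure M (space M) = 1"
    by (rule M.emeasure_space_1)
  finally have "prob_on_unit_interval \<Lambda>"
    unfolding prob_on_unit_interval_def using M.prob_space_distr[OF clamp01_M] by (simp add: \<Lambda>_def)
  moreover have "(\<lambda>i. \<integral>x. bern_clamped n j x \<partial>L (r i)) \<longlonglongrightarrow> (\<integral>x. bern_clamped n j x \<partial>\<Lambda>)" for j
  proof -
    have "(\<lambda>i. \<integral>x. bern_clamped n j x \<partial>(L \<circ> id \<circ> r) i) \<longlonglongrightarrow> (\<integral>x. bern_clamped n j x \<partial>M)"
    proof (rule weak_conv_imp_integral_bdd_continuous_conv[where B=1])
      show "real_distribution ((L \<circ> id \<circ> r) i)" for i
        using distr by simp
      show "norm (bern_clamped n j x) \<le> 1" for x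
        using bern_clamped_nonneg bern_clamped_le_1 by simp
    qed (use M conv isCont_bern_clamped in \<open>simp_all add: comp_def\<close>)
    moreover have "(\<integral>x. bern_clamped n j x \<partial>\<Lambda>) = (\<integral>x. bern_clamped n j x \<partial>M)"
      unfolding \<Lambda>_def by (simp add: integral_distr[OF clamp01_M] bern_clamped_clamp)
    ultimately show ?thesis
      by simp
  qed
  ultimately show ?thesis
    using r that by blast
qed

definition moment_defect :: "nat \<Rightarrow> (nat \<Rightarrow> real) \<Rightarrow> real measure \<Rightarrow> real" where
  "moment_defect n b \<Lambda> = (\<Sum>j\<le>n. ((\<integral>x. bern_clamped n j x \<partial>\<Lambda>) - b j)\<^sup>2)"

lemma moment_defect_nonneg: "moment_defect n b \<Lambda> \<ge> 0"
  unfolding moment_defect_def by (intro sum_nonneg) auto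

lemma exists_min_moment_defect:
  obtains \<Lambda> where "prob_on_unit_interval \<Lambda>"
    "\<And>L. prob_on_unit_interval L \<Longrightarrow> moment_defect n b \<Lambda> \<le> moment_defect n b L"
proof -
  define D where "D = moment_defect n b"
  define \<delta> where "\<delta> = Inf (D ` Collect prob_on_unit_interval)"
  have nonempty: "D ` Collect prob_on_unit_interval \<noteq> {}"
    using prob_on_unit_interval_return[of 0] by auto
  have "bdd_below (D ` Collect prob_on_unit_interval)"
    using moment_defect_nonneg by (intro bdd_belowI[of _ 0]) (auto simp: D_def)
  then have lower: "\<delta> \<le> D L" if "prob_on_unit_interval L" for L
    unfolding \<delta>_def using that by (intro cInf_lower) auto
  have "\<exists>L. prob_on_unit_interval L \<and> D L < \<delta> + inverse (real (Suc i))" for i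
    using cInf_lessD[OF nonempty, of "\<delta> + inverse (real (Suc i))"] by (auto simp: \<delta>_def)
  then obtain Ls where Ls: "\<And>i. prob_on_unit_interval (Ls i)"
    "\<And>i. D (Ls i) < \<delta> + inverse (real (Suc i))"
    by metis
  obtain r \<Lambda> where r: "strict_mono r" and \<Lambda>: "prob_on_unit_interval \<Lambda>"
    and conv: "\<And>j. (\<lambda>i. \<integral>x. bern_clamped n j x \<partial>Ls (r i)) \<longlonglongrightarrow> (\<integral>x. bern_clamped n j x \<partial>\<Lambda>)"
    using prob_on_unit_interval_convergent_subseq[where L=Ls and n=n, OF Ls(1)] by metis
  have "D \<Lambda> \<le> \<delta>"
  proof (rule LIMSEQ_le)
    show "(\<lambda>i. D (Ls (r i))) \<longlonglongrightarrow> D \<Lambda>"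
      unfolding D_def moment_defect_def by (intro tendsto_intros conv)
    show "(\<lambda>i. \<delta> + inverse (real (Suc i))) \<longlonglongrightarrow> \<delta>"
      using tendsto_add[OF tendsto_const LIMSEQ_inverse_real_of_nat, of \<delta>] by simp
    have "D (Ls (r i)) \<le> \<delta> + inverse (real (Suc i))" for i
    proof -
      have "inverse (real (Suc (r i))) \<le> inverse (real (Suc i))"
        using seq_suble[OF r, of i] by (intro le_imp_inverse_le) auto
      then show ?thesis
        using Ls(2)[of "r i"] by linarith
    qed
    then show "\<exists>N. \<forall>i\<ge>N. D (Ls (r i)) \<le> \<delta> + inverse (real (Suc i))"
      by blast
  qed
  show ?thesis
  proof (rule that[OF \<Lambda>])
    fix L assume "prob_on_unit_interval L"
    with lower[of L] \<open>D \<Lambda> \<le> \<delta>\<close> show "moment_defect n b \<Lambda> \<le> moment_defect n b L"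
      unfolding D_def by linarith
  qed
qed

text \<open>Moving mass s from a minimiser towards a point mass at \<alpha> changes the defect by
  s (2 A + s B), with A the left-hand side below; minimality forces A \<ge> 0.\<close>
lemma min_moment_defect_variational_ineq:
  assumes \<Lambda>: "prob_on_unit_interval \<Lambda>"
    and min: "\<And>L. prob_on_unit_interval L \<Longrightarrow> moment_defect n b \<Lambda> \<le> moment_defect n b L"
    and \<alpha>: "0 \<le> \<alpha>" "\<alpha> \<le> 1"
  defines "q \<equiv> \<lambda>j. \<integral>x. bern_clamped n j x \<partial>\<Lambda>"
  shows "(\<Sum>j\<le>n. (q j - b j) * (\<alpha>^j * (1-\<alpha>)^(n-j) - q j)) \<ge> 0"
proof -
  define v where "v j = \<alpha>^j * (1-\<alpha>)^(n-j) - q j" for j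
  define A where "A = (\<Sum>j\<le>n. (q j - b j) * v j)"
  define B where "B = (\<Sum>j\<le>n. (v j)\<^sup>2)"
  have "B * s * s + 2 * A * s \<ge> 0" if s: "0 < s" "s \<le> 1" for s
  proof -
    have "(\<integral>x. bern_clamped n j x \<partial>point_mix s \<alpha> \<Lambda>) = q j + s * v j" for j
    proof -
      have "(\<integral>x. bern_clamped n j x \<partial>point_mix s \<alpha> \<Lambda>) = s * bern_clamped n j \<alpha> + (1 - s) * q j"
        unfolding q_def using s by (intro point_mix(2)[OF \<Lambda> \<alpha>] bern_clamped_nonneg bern_clamped_le_1) auto
      then show ?thesis
        using \<alpha> by (simp add: bern_clamped_id v_def algebra_simps)
    qed
    then have "moment_defect n b (point_mix s \<alpha> \<Lambda>) = (\<Sum>j\<le>n. (q j - b j + s * v j)\<^sup>2)"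
      unfolding moment_defect_def by (simp add: algebra_simps)
    also have "\<dots> = (\<Sum>j\<le>n. (q j - b j)\<^sup>2) + (\<Sum>j\<le>n. (v j)\<^sup>2 * (s * s))
        + (\<Sum>j\<le>n. ((q j - b j) * v j) * (2 * s))"
      unfolding sum.distrib[symmetric] by (intro sum.cong refl) (simp add: power2_eq_square algebra_simps)
    also have "\<dots> = moment_defect n b \<Lambda> + B * (s * s) + A * (2 * s)"
    proof -
      have "(\<Sum>j\<le>n. (q j - b j)\<^sup>2) = moment_defect n b \<Lambda>"
        by (simp add: moment_defect_def q_def)
      moreover have "(\<Sum>j\<le>n. (v j)\<^sup>2 * (s * s)) = B * (s * s)"
        by (simp add: B_def sum_distrib_right)
      moreover have "(\<Sum>j\<le>n. ((q j - b j) * v j) * (2 * s)) = A * (2 * s)"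
        by (simp add: A_def sum_distrib_right)
      ultimately show ?thesis
        by simp
    qed
    finally have "moment_defect n b (point_mix s \<alpha> \<Lambda>) = moment_defect n b \<Lambda> + B * (s * s) + A * (2 * s)" .
    moreover have "prob_on_unit_interval (point_mix s \<alpha> \<Lambda>)"
      using s by (intro point_mix(1)[OF \<Lambda> \<alpha>]) auto
    ultimately have "0 \<le> B * (s * s) + A * (2 * s)"
      using min by fastforce
    then show ?thesis
      by (simp add: mult_ac)
  qed
  then have "A \<ge> 0"
    by (rule linear_coeff_nonneg_if_nonneg_near_0)
  then show ?thesis
    by (simp add: A_def v_def)
qed

lemma binomial_sum_bernstein: "(\<Sum>j\<le>n. real (n choose j) * (\<alpha>^j * (1-\<alpha>)^(n-j))) = 1"
  using binomial_ring[of \<alpha> "1-\<alpha>" n] by (simp add: mult.assoc)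

text \<open>Take a distribution whose moment vector q is nearest to b. Subtracting from the residual
  y = q - b a suitable multiple of the binomial coefficients makes the variational inequality a
  nonnegativity statement on [0,1]; tested against b it gives -|y|^2 \<ge> 0.\<close>
lemma exists_prob_on_unit_interval_moments:
  fixes b :: "nat \<Rightarrow> real"
  assumes pos: "\<And>y. (\<And>\<alpha>. 0 \<le> \<alpha> \<Longrightarrow> \<alpha> \<le> 1 \<Longrightarrow> (\<Sum>j\<le>n. y j * (\<alpha>^j * (1-\<alpha>)^(n-j))) \<ge> 0) \<Longrightarrow>
      (\<Sum>j\<le>n. y j * b j) \<ge> 0"
    and total: "(\<Sum>j\<le>n. real (n choose j) * b j) = 1"
  obtains \<Lambda> where "prob_on_unit_interval \<Lambda>" "\<And>j. j \<le> n \<Longrightarrow> (\<integral>\<alpha>. \<alpha>^j * (1-\<alpha>)^(n-j) \<partial>\<Lambda>) = b j"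
proof -
  obtain \<Lambda> where \<Lambda>: "prob_on_unit_interval \<Lambda>"
    and min: "\<And>L. prob_on_unit_interval L \<Longrightarrow> moment_defect n b \<Lambda> \<le> moment_defect n b L"
    using exists_min_moment_defect by blast
  define q where "q j = (\<integral>x. bern_clamped n j x \<partial>\<Lambda>)" for j
  define y where "y j = q j - b j" for j
  define Y where "Y = (\<Sum>j\<le>n. y j * q j)"
  define y' where "y' j = y j - Y * real (n choose j)" for j
  have "(\<Sum>j\<le>n. y' j * b j) \<ge> 0"
  proof (rule pos)
    fix \<alpha> :: real assume \<alpha>: "0 \<le> \<alpha>" "\<alpha> \<le> 1"
    have "(\<Sum>j\<le>n. y' j * (\<alpha>^j * (1-\<alpha>)^(n-j))) =
        (\<Sum>j\<le>n. y j * (\<alpha>^j * (1-\<alpha>)^(n-j))) - Y * (\<Sum>j\<le>n. real (n choose j) * (\<alpha>^j * (1-\<alpha>)^(n-j)))"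
      unfolding y'_def by (simp add: algebra_simps sum_subtractf sum_distrib_left)
    also have "\<dots> = (\<Sum>j\<le>n. y j * (\<alpha>^j * (1-\<alpha>)^(n-j) - q j))"
      unfolding binomial_sum_bernstein Y_def by (simp add: algebra_simps sum_subtractf)
    also have "\<dots> \<ge> 0"
      using min_moment_defect_variational_ineq[OF \<Lambda> min \<alpha>] by (simp add: y_def q_def)
    finally show "(\<Sum>j\<le>n. y' j * (\<alpha>^j * (1-\<alpha>)^(n-j))) \<ge> 0" .
  qed
  moreover have "(\<Sum>j\<le>n. y' j * b j) = - (\<Sum>j\<le>n. (y j)\<^sup>2)"
  proof -
    have "(\<Sum>j\<le>n. y' j * b j) = (\<Sum>j\<le>n. y j * b j) - Y * (\<Sum>j\<le>n. real (n choose j) * b j)"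
      unfolding y'_def by (simp add: algebra_simps sum_subtractf sum_distrib_left)
    also have "\<dots> = - (\<Sum>j\<le>n. (y j)\<^sup>2)"
      unfolding total Y_def
      by (simp add: y_def power2_eq_square algebra_simps sum_subtractf sum.distrib sum_distrib_left)
    finally show ?thesis .
  qed
  ultimately have "(\<Sum>j\<le>n. (y j)\<^sup>2) = 0"
    using sum_nonneg[of "{..n}" "\<lambda>j. (y j)\<^sup>2"] by simp
  then have "\<forall>j\<in>{..n}. (y j)\<^sup>2 = 0"
    by (subst (asm) sum_nonneg_eq_0_iff) auto
  then have "(\<integral>\<alpha>. \<alpha>^j * (1-\<alpha>)^(n-j) \<partial>\<Lambda>) = b j" if "j \<le> n" for j
    using that integral_bern_clamped[OF \<Lambda>] by (simp add: y_def q_def)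
  with \<Lambda> show ?thesis
    by (rule that)
qed

section \<open>The two priors on boxes\<close>

lemma measure_pmf_in_space_prob_algebra: "measure_pmf p \<in> space (prob_algebra (measure_pmf p))"
  by (simp add: space_prob_algebra prob_space_measure_pmf)

lemma spike_slab_coord_clamp01: "spike_slab_coord \<alpha> G = spike_slab_coord (clamp01 \<alpha>) G"
proof -
  have "bernoulli_pmf \<alpha> = bernoulli_pmf (clamp01 \<alpha>)"
    by (rule pmf_eqI) (simp add: bernoulli_pmf.rep_eq clamp01_def)
  then show ?thesis
    unfolding spike_slab_coord_def by simp
qed

lemma measure_density_lborel_singleton:
  fixes f :: "real \<Rightarrow> ennreal"
  assumes "f \<in> borel_measurable borel"
  shows "measure (density lborel f) {x} = 0"
proof -
  have "AE y in lborel. y \<in> {x} \<longrightarrow> f y = 0"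
    using AE_lborel_singleton[of x] by eventually_elim simp
  then have "{x} \<in> null_sets (density lborel f)"
    using assms by (simp add: null_sets_density_iff)
  then show ?thesis
    by (simp add: measure_def null_setsD1)
qed

locale slab_prob =
  fixes G :: "real measure"
  assumes prob_space_G: "prob_space G" and sets_G: "sets G = sets borel"
begin

definition spike_or_slab :: "bool \<Rightarrow> real measure" where
  "spike_or_slab b = (if b then G else return borel 0)"

lemma measurable_spike_or_slab: "spike_or_slab \<in> measurable (measure_pmf p) (prob_algebra borel)"
  using prob_space_G sets_G by (auto simp: spike_or_slab_def space_prob_algebra prob_space_return)

lemma spike_slab_coord_bind: "spike_slab_coord \<alpha> G = measure_pmf (bernoulli_pmf \<alpha>) \<bind> spike_or_slab"
  unfolding spike_slab_coord_def spike_or_slab_def ..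

lemma prob_space_spike_slab_coord: "prob_space (spike_slab_coord \<alpha> G)"
  unfolding spike_slab_coord_bind
  by (rule prob_space_bind'[OF measure_pmf_in_space_prob_algebra measurable_spike_or_slab])

lemma sets_spike_slab_coord: "sets (spike_slab_coord \<alpha> G) = sets borel"
  unfolding spike_slab_coord_bind
  by (rule sets_bind'[OF measure_pmf_in_space_prob_algebra measurable_spike_or_slab])

lemma emeasure_spike_slab_coord:
  assumes \<alpha>: "0 \<le> \<alpha>" "\<alpha> \<le> 1" and B: "B \<in> sets borel"
  shows "emeasure (spike_slab_coord \<alpha> G) B = ennreal (\<alpha> * measure G B + (1 - \<alpha>) * indicator B 0)"
proof -
  interpret G: prob_space G
    by (rule prob_space_G)
  have "emeasure (spike_slab_coord \<alpha> G) B =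
      (\<integral>\<^sup>+b. emeasure (spike_or_slab b) B \<partial>measure_pmf (bernoulli_pmf \<alpha>))"
    unfolding spike_slab_coord_bind
    by (rule emeasure_bind[OF _ measurable_prob_algebraD[OF measurable_spike_or_slab] B]) simp
  also have "\<dots> = emeasure G B * \<alpha> + emeasure (return borel 0) B * (1 - \<alpha>)"
    using \<alpha> by (simp add: spike_or_slab_def)
  also have "\<dots> = ennreal (\<alpha> * measure G B + (1 - \<alpha>) * indicator B 0)"
    using \<alpha> B sets_G
    by (simp add: G.emeasure_eq_measure ennreal_mult'[symmetric] ennreal_plus[symmetric] mult.commute
        del: ennreal_plus split: split_indicator)
  finally show ?thesis .
qed

definition box_prob :: "nat \<Rightarrow> (nat \<Rightarrow> real set) \<Rightarrow> real \<Rightarrow> real" where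
  "box_prob n A \<alpha> = (\<Prod>i\<in>{..<n}. \<alpha> * measure G (A i) + (1 - \<alpha>) * indicator (A i) 0)"

lemma box_prob_measurable [measurable]: "box_prob (n::nat) A \<in> borel_measurable borel"
  unfolding box_prob_def by measurable

lemma box_prob_bounds:
  assumes "0 \<le> \<alpha>" "\<alpha> \<le> 1"
  shows "0 \<le> box_prob n A \<alpha>" "box_prob n A \<alpha> \<le> 1"
proof -
  interpret G: prob_space G
    by (rule prob_space_G)
  have "\<alpha> * measure G (A i) \<le> \<alpha> * 1" "(1 - \<alpha>) * indicator (A i) 0 \<le> (1 - \<alpha>) * (1::real)" for i
    using assms by (intro mult_left_mono; simp add: indicator_def)+
  then have "0 \<le> \<alpha> * measure G (A i) + (1 - \<alpha>) * indicator (A i) 0 \<and>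
      \<alpha> * measure G (A i) + (1 - \<alpha>) * indicator (A i) 0 \<le> 1" for i
    using assms by (fastforce simp: indicator_def)
  then show "0 \<le> box_prob n A \<alpha>" "box_prob n A \<alpha> \<le> 1"
    unfolding box_prob_def by (auto intro: prod_nonneg prod_le_1)
qed

lemma emeasure_PiM_spike_slab_coord_box:
  assumes \<alpha>: "0 \<le> \<alpha>" "\<alpha> \<le> 1" and A: "\<And>i. i \<in> {..<n} \<Longrightarrow> A i \<in> sets borel"
  shows "emeasure (PiM {..<n} (\<lambda>_. spike_slab_coord \<alpha> G)) (PiE {..<n} A) = ennreal (box_prob n A \<alpha>)"
proof -
  interpret P: product_prob_space "\<lambda>_. spike_slab_coord \<alpha> G"
    by (rule product_prob_spaceI) (rule prob_space_spike_slab_coord)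
  have "emeasure (PiM {..<n} (\<lambda>_. spike_slab_coord \<alpha> G)) (PiE {..<n} A) =
      (\<Prod>i\<in>{..<n}. emeasure (spike_slab_coord \<alpha> G) (A i))"
    using A by (intro P.emeasure_PiM) (auto simp: sets_spike_slab_coord)
  also have "\<dots> = (\<Prod>i\<in>{..<n}. ennreal (\<alpha> * measure G (A i) + (1 - \<alpha>) * indicator (A i) 0))"
    using A \<alpha> by (intro prod.cong refl emeasure_spike_slab_coord) auto
  also have "\<dots> = ennreal (box_prob n A \<alpha>)"
    unfolding box_prob_def using \<alpha> by (intro prod_ennreal) auto
  finally show ?thesis .
qed

lemma measurable_spike_slab_kernel:
  fixes n :: nat
  assumes "sets L = sets (borel :: real measure)"
  shows "(\<lambda>\<alpha>. PiM {..<n} (\<lambda>_. spike_slab_coord \<alpha> G)) \<in>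
    measurable L (subprob_algebra (PiM {..<n} (\<lambda>_. borel)))"
proof -
  have box: "(\<lambda>\<alpha>. emeasure (PiM {..<n} (\<lambda>_. spike_slab_coord \<alpha> G)) (PiE {..<n} E)) \<in> borel_measurable borel"
    if "\<And>i. i \<in> {..<n} \<Longrightarrow> E i \<in> sets borel" for E
  proof -
    have "emeasure (PiM {..<n} (\<lambda>_. spike_slab_coord \<alpha> G)) (PiE {..<n} E) = ennreal (box_prob n E (clamp01 \<alpha>))"
      for \<alpha>
      using emeasure_PiM_spike_slab_coord_box[of "clamp01 \<alpha>" n E] clamp01_bounds[of \<alpha>] that
      by (subst spike_slab_coord_clamp01) simp
    then show ?thesis
      by simp
  qed
  have "(\<lambda>\<alpha>. PiM {..<n} (\<lambda>_. spike_slab_coord \<alpha> G)) \<in>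
      measurable borel (subprob_algebra (PiM {..<n} (\<lambda>_. borel)))"
  proof (rule measurable_subprob_algebra_generated[where \<Omega>="PiE {..<n} (\<lambda>_. UNIV)"
        and G="prod_algebra {..<n} (\<lambda>_. borel)"])
    show "sets (PiM {..<n} (\<lambda>_. borel)) = sigma_sets (PiE {..<n} (\<lambda>_. UNIV)) (prod_algebra {..<n} (\<lambda>_. borel))"
      by (simp add: sets_PiM)
    show "prod_algebra {..<n} (\<lambda>_. borel) \<subseteq> Pow (PiE {..<n} (\<lambda>_. UNIV))"
      using prod_algebra_sets_into_space[of "{..<n}" "\<lambda>_. borel"] by simp
    show "subprob_space (PiM {..<n} (\<lambda>_. spike_slab_coord \<alpha> G))" for \<alpha>
      using prob_space_PiM[of "{..<n}" "\<lambda>_. spike_slab_coord \<alpha> G"] prob_space_spike_slab_coord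
      by (simp add: prob_space_imp_subprob_space)
    show "sets (PiM {..<n} (\<lambda>_. spike_slab_coord \<alpha> G)) = sets (PiM {..<n} (\<lambda>_. borel))" for \<alpha>
      by (rule sets_PiM_cong) (auto simp: sets_spike_slab_coord)
    show "(\<lambda>\<alpha>. emeasure (PiM {..<n} (\<lambda>_. spike_slab_coord \<alpha> G)) A) \<in> borel_measurable borel"
      if "A \<in> prod_algebra {..<n} (\<lambda>_. borel)" for A
      using that by (elim prod_algebraE_all) (use box in auto)
    show "(\<lambda>\<alpha>. emeasure (PiM {..<n} (\<lambda>_. spike_slab_coord \<alpha> G)) (PiE {..<n} (\<lambda>_. UNIV))) \<in>
        borel_measurable borel"
      by (rule box) simp
  qed (rule Int_stable_prod_algebra)
  then show ?thesis
    by (simp add: measurable_cong_sets[OF assms refl])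
qed

lemma sets_spike_slab_prior:
  assumes "sets \<Lambda> = sets (borel :: real measure)"
  shows "sets (spike_slab_prior n \<Lambda> G) = sets (PiM {..<n} (\<lambda>_. borel))"
proof -
  have "space \<Lambda> \<noteq> {}"
    using sets_eq_imp_space_eq[OF assms] by simp
  then show ?thesis
    unfolding spike_slab_prior_def
    by (rule sets_bind[rotated]) (rule sets_PiM_cong, auto simp: sets_spike_slab_coord)
qed

text \<open>box_weight n S A is the mass of the box A under the law of \<theta> with support S; both priors
  give A a mixture of these masses over S, with weights c(|S|).\<close>
definition box_weight :: "nat \<Rightarrow> nat set \<Rightarrow> (nat \<Rightarrow> real set) \<Rightarrow> real" where
  "box_weight n S A = (\<Prod>i\<in>S. measure G (A i)) * (\<Prod>i\<in>{..<n} - S. indicator (A i) 0)"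

definition box_mixture :: "nat \<Rightarrow> (nat \<Rightarrow> real) \<Rightarrow> (nat \<Rightarrow> real set) \<Rightarrow> real" where
  "box_mixture n c A = (\<Sum>S\<in>Pow {..<n}. c (card S) * box_weight n S A)"

lemma box_weight_nonneg: "0 \<le> box_weight n S A"
  unfolding box_weight_def by (intro mult_nonneg_nonneg prod_nonneg) auto

lemma box_mixture_cong:
  assumes "\<And>s. s \<le> n \<Longrightarrow> c s = d s"
  shows "box_mixture n c A = box_mixture n d A"
proof -
  have "card S \<le> n" if "S \<in> Pow {..<n}" for S
    using that card_mono[of "{..<n}" S] by simp
  then show ?thesis
    unfolding box_mixture_def using assms by (intro sum.cong) auto
qed

lemma box_prob_eq_box_mixture:
  "box_prob n A \<alpha> = box_mixture n (\<lambda>s. \<alpha>^s * (1-\<alpha>)^(n-s)) A"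
proof -
  have "box_prob n A \<alpha> = (\<Sum>S\<in>Pow {..<n}. (\<Prod>i\<in>S. \<alpha> * measure G (A i)) *
      (\<Prod>i\<in>{..<n} - S. (1 - \<alpha>) * indicator (A i) 0))"
    unfolding box_prob_def by (rule prod_add) simp
  also have "\<dots> = (\<Sum>S\<in>Pow {..<n}. \<alpha>^card S * (1-\<alpha>)^(n - card S) * box_weight n S A)"
  proof (intro sum.cong refl)
    fix S assume "S \<in> Pow {..<n}"
    then have "card ({..<n} - S) = n - card S"
      by (simp add: card_Diff_subset finite_subset)
    then show "(\<Prod>i\<in>S. \<alpha> * measure G (A i)) * (\<Prod>i\<in>{..<n} - S. (1 - \<alpha>) * indicator (A i) 0) =
        \<alpha>^card S * (1-\<alpha>)^(n - card S) * box_weight n S A"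
      unfolding box_weight_def prod.distrib by (simp add: mult_ac)
  qed
  finally show ?thesis
    by (simp add: box_mixture_def)
qed

lemma emeasure_spike_slab_prior_box:
  assumes \<Lambda>: "prob_on_unit_interval \<Lambda>" and A: "\<And>i. i \<in> {..<n} \<Longrightarrow> A i \<in> sets borel"
  shows "emeasure (spike_slab_prior n \<Lambda> G) (PiE {..<n} A) =
    ennreal (box_mixture n (\<lambda>s. \<integral>\<alpha>. \<alpha>^s * (1-\<alpha>)^(n-s) \<partial>\<Lambda>) A)"
proof -
  note \<Lambda>' = prob_on_unit_intervalD[OF \<Lambda>]
  have "space \<Lambda> \<noteq> {}"
    using sets_eq_imp_space_eq[OF \<Lambda>'(2)] by simp
  moreover have "PiE {..<n} A \<in> sets (PiM {..<n} (\<lambda>_. borel))"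
    using A by (intro sets_PiM_I_finite) auto
  ultimately have "emeasure (spike_slab_prior n \<Lambda> G) (PiE {..<n} A) =
      (\<integral>\<^sup>+\<alpha>. emeasure (PiM {..<n} (\<lambda>_. spike_slab_coord \<alpha> G)) (PiE {..<n} A) \<partial>\<Lambda>)"
    unfolding spike_slab_prior_def by (rule emeasure_bind[OF _ measurable_spike_slab_kernel[OF \<Lambda>'(2)]])
  also have "\<dots> = (\<integral>\<^sup>+\<alpha>. ennreal (box_prob n A \<alpha>) \<partial>\<Lambda>)"
  proof (rule nn_integral_cong_AE)
    show "AE \<alpha> in \<Lambda>. emeasure (PiM {..<n} (\<lambda>_. spike_slab_coord \<alpha> G)) (PiE {..<n} A) = ennreal (box_prob n A \<alpha>)"
      using AE_prob_on_unit_interval[OF \<Lambda>]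
    proof eventually_elim
      case (elim \<alpha>)
      then show ?case
        using emeasure_PiM_spike_slab_coord_box[of \<alpha> n A] A by simp
    qed
  qed
  also have "\<dots> = ennreal (\<integral>\<alpha>. box_prob n A \<alpha> \<partial>\<Lambda>)"
  proof (rule nn_integral_eq_integral)
    show "integrable \<Lambda> (box_prob n A)"
      by (rule integrable_prob_on_unit_interval[OF \<Lambda>, where B=1]) (simp_all add: box_prob_bounds)
    show "AE x in \<Lambda>. 0 \<le> box_prob n A x"
      using AE_prob_on_unit_interval[OF \<Lambda>] by eventually_elim (simp add: box_prob_bounds)
  qed
  also have "(\<integral>\<alpha>. box_prob n A \<alpha> \<partial>\<Lambda>) = box_mixture n (\<lambda>s. \<integral>\<alpha>. \<alpha>^s * (1-\<alpha>)^(n-s) \<partial>\<Lambda>) A"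
  proof -
    have "integrable \<Lambda> (\<lambda>\<alpha>. \<alpha>^s * (1-\<alpha>)^(n-s))" for s
      by (rule integrable_prob_on_unit_interval[OF \<Lambda>, where B=1]) (auto intro!: mult_le_one power_le_one)
    then show ?thesis
      by (simp add: box_prob_eq_box_mixture box_mixture_def)
  qed
  finally show ?thesis .
qed

lemma measurable_embed_support: "embed_support n S \<in> measurable (PiM S (\<lambda>_. G)) (PiM {..<n} (\<lambda>_. borel))"
  unfolding embed_support_def
proof (rule measurable_restrict)
  fix i
  show "(\<lambda>x. if i \<in> S then x i else 0) \<in> measurable (PiM S (\<lambda>_. G)) borel"
  proof (cases "i \<in> S")
    case True
    have "(\<lambda>x. x i) \<in> measurable (PiM S (\<lambda>_. G)) G"
      by (rule measurable_component_singleton[OF True])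
    then show ?thesis
      using True by (simp add: measurable_cong_sets[OF refl sets_G])
  qed simp
qed

definition slab_on :: "nat \<Rightarrow> nat set \<Rightarrow> (nat \<Rightarrow> real) measure" where
  "slab_on n S = distr (PiM S (\<lambda>_. G)) (PiM {..<n} (\<lambda>_. borel)) (embed_support n S)"

definition slab_of_size :: "nat \<Rightarrow> nat \<Rightarrow> (nat \<Rightarrow> real) measure" where
  "slab_of_size n s = measure_pmf (pmf_of_set {S. S \<subseteq> {..<n} \<and> card S = s}) \<bind> slab_on n"

lemma model_selection_prior_bind: "model_selection_prior n \<pi> G = measure_pmf \<pi> \<bind> slab_of_size n"
  unfolding model_selection_prior_def slab_of_size_def slab_on_def ..

lemma measurable_slab_on:
  "slab_on n \<in> measurable (measure_pmf p) (prob_algebra (PiM {..<n} (\<lambda>_. borel)))"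
proof -
  have "prob_space (slab_on n S)" for S
    unfolding slab_on_def using prob_space_G
    by (intro prob_space.prob_space_distr prob_space_PiM measurable_embed_support)
  then show ?thesis
    by (simp add: space_prob_algebra slab_on_def)
qed

lemma measurable_slab_of_size:
  "slab_of_size n \<in> measurable (measure_pmf p) (prob_algebra (PiM {..<n} (\<lambda>_. borel)))"
  using prob_space_bind'[OF measure_pmf_in_space_prob_algebra measurable_slab_on]
    sets_bind'[OF measure_pmf_in_space_prob_algebra measurable_slab_on]
  by (simp add: space_prob_algebra slab_of_size_def)

lemma prob_space_model_selection_prior: "prob_space (model_selection_prior n \<pi> G)"
  unfolding model_selection_prior_bind
  by (rule prob_space_bind'[OF measure_pmf_in_space_prob_algebra measurable_slab_of_size])

lemma sets_model_selection_prior: "sets (model_selection_prior n \<pi> G) = sets (PiM {..<n} (\<lambda>_. borel))"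
  unfolding model_selection_prior_bind
  by (rule sets_bind'[OF measure_pmf_in_space_prob_algebra measurable_slab_of_size])

lemma emeasure_slab_on_box:
  assumes S: "S \<subseteq> {..<n}" and A: "\<And>i. i \<in> {..<n} \<Longrightarrow> A i \<in> sets borel"
  shows "emeasure (slab_on n S) (PiE {..<n} A) = ennreal (box_weight n S A)"
proof -
  interpret G: prob_space G
    by (rule prob_space_G)
  interpret P: product_prob_space "\<lambda>_. G"
    by (rule product_prob_spaceI) (rule prob_space_G)
  have "PiE {..<n} A \<in> sets (PiM {..<n} (\<lambda>_. borel))"
    using A by (intro sets_PiM_I_finite) auto
  then have "emeasure (slab_on n S) (PiE {..<n} A) =
      emeasure (PiM S (\<lambda>_. G)) (embed_support n S -` PiE {..<n} A \<inter> space (PiM S (\<lambda>_. G)))"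
    unfolding slab_on_def by (rule emeasure_distr[OF measurable_embed_support])
  also have "embed_support n S -` PiE {..<n} A \<inter> space (PiM S (\<lambda>_. G)) =
      (if \<forall>i\<in>{..<n} - S. 0 \<in> A i then PiE S A else {})"
    using S sets_eq_imp_space_eq[OF sets_G]
    by (auto simp: space_PiM embed_support_def PiE_iff extensional_def split: if_splits)
  also have "emeasure (PiM S (\<lambda>_. G)) \<dots> = ennreal (box_weight n S A)"
  proof (cases "\<forall>i\<in>{..<n} - S. 0 \<in> A i")
    case True
    have "emeasure (PiM S (\<lambda>_. G)) (PiE S A) = (\<Prod>i\<in>S. emeasure G (A i))"
      using A S sets_G by (intro P.emeasure_PiM) (auto intro: finite_subset)
    also have "\<dots> = ennreal (box_weight n S A)"
      using True by (simp add: G.emeasure_eq_measure prod_ennreal box_weight_def)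
    finally show ?thesis
      using True by simp
  next
    case False
    then obtain i where "i \<in> {..<n} - S" "0 \<notin> A i"
      by blast
    then have "(\<Prod>i\<in>{..<n} - S. indicator (A i) 0) = (0::real)"
      by (intro prod_zero) (auto intro!: bexI[of _ i])
    then have "box_weight n S A = 0"
      unfolding box_weight_def by simp
    moreover have "(if \<forall>i\<in>{..<n} - S. 0 \<in> A i then PiE S A else {}) = {}"
      using False by auto
    ultimately show ?thesis
      by simp
  qed
  finally show ?thesis .
qed

lemma emeasure_slab_of_size_box:
  assumes s: "s \<le> n" and A: "\<And>i. i \<in> {..<n} \<Longrightarrow> A i \<in> sets borel"
  shows "emeasure (slab_of_size n s) (PiE {..<n} A) =
     ennreal ((\<Sum>S\<in>{S. S \<subseteq> {..<n} \<and> card S = s}. box_weight n S A) / real (n choose s))"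
proof -
  define Ss where "Ss = {S. S \<subseteq> {..<n} \<and> card S = s}"
  have "finite Ss"
    unfolding Ss_def by (rule finite_subset[of _ "Pow {..<n}"]) auto
  moreover have "{..<s} \<in> Ss"
    using s by (auto simp: Ss_def)
  ultimately have "card Ss > 0"
    by (auto simp: card_gt_0_iff)
  have card: "card Ss = n choose s"
    unfolding Ss_def using n_subsets[of "{..<n}" s] by simp
  have box: "PiE {..<n} A \<in> sets (PiM {..<n} (\<lambda>_. borel))"
    using A by (intro sets_PiM_I_finite) auto
  have "emeasure (slab_of_size n s) (PiE {..<n} A) =
      (\<integral>\<^sup>+S. emeasure (slab_on n S) (PiE {..<n} A) \<partial>measure_pmf (pmf_of_set Ss))"
    unfolding slab_of_size_def Ss_def[symmetric]
    by (rule emeasure_bind[OF _ measurable_prob_algebraD[OF measurable_slab_on] box]) simp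
  also have "\<dots> = (\<Sum>S\<in>Ss. emeasure (slab_on n S) (PiE {..<n} A)) / card Ss"
    using \<open>finite Ss\<close> \<open>{..<s} \<in> Ss\<close> by (intro nn_integral_pmf_of_set) auto
  also have "(\<Sum>S\<in>Ss. emeasure (slab_on n S) (PiE {..<n} A)) = (\<Sum>S\<in>Ss. ennreal (box_weight n S A))"
    using A by (intro sum.cong refl emeasure_slab_on_box) (auto simp: Ss_def)
  also have "\<dots> = ennreal (\<Sum>S\<in>Ss. box_weight n S A)"
    by (rule sum_ennreal) (rule box_weight_nonneg)
  also have "\<dots> / (of_nat (card Ss) :: ennreal) = ennreal ((\<Sum>S\<in>Ss. box_weight n S A) / real (n choose s))"
    using \<open>card Ss > 0\<close> card
    by (simp add: divide_ennreal sum_nonneg box_weight_nonneg ennreal_of_nat_eq_real_of_nat)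
  finally show ?thesis
    unfolding Ss_def .
qed

lemma emeasure_model_selection_prior_box:
  assumes \<pi>: "set_pmf \<pi> \<subseteq> {..n}" and A: "\<And>i. i \<in> {..<n} \<Longrightarrow> A i \<in> sets borel"
  shows "emeasure (model_selection_prior n \<pi> G) (PiE {..<n} A) =
    ennreal (box_mixture n (\<lambda>s. pmf \<pi> s / real (n choose s)) A)"
proof -
  define X where "X s = (\<Sum>S\<in>{S. S \<subseteq> {..<n} \<and> card S = s}. box_weight n S A) / real (n choose s)" for s
  have X_nonneg: "0 \<le> X s" for s
    unfolding X_def by (intro divide_nonneg_nonneg sum_nonneg box_weight_nonneg) auto
  have box: "PiE {..<n} A \<in> sets (PiM {..<n} (\<lambda>_. borel))"
    using A by (intro sets_PiM_I_finite) auto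
  have "emeasure (model_selection_prior n \<pi> G) (PiE {..<n} A) =
      (\<integral>\<^sup>+s. emeasure (slab_of_size n s) (PiE {..<n} A) \<partial>measure_pmf \<pi>)"
    unfolding model_selection_prior_bind
    by (rule emeasure_bind[OF _ measurable_prob_algebraD[OF measurable_slab_of_size] box]) simp
  also have "\<dots> = (\<Sum>s\<in>{..n}. emeasure (slab_of_size n s) (PiE {..<n} A) * pmf \<pi> s)"
    by (rule nn_integral_measure_pmf_support) (use \<pi> in auto)
  also have "\<dots> = (\<Sum>s\<in>{..n}. ennreal (X s * pmf \<pi> s))"
  proof (intro sum.cong refl)
    fix s assume "s \<in> {..n}"
    then have "emeasure (slab_of_size n s) (PiE {..<n} A) = ennreal (X s)"
      using emeasure_slab_of_size_box[of s n A] A by (simp add: X_def)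
    then show "emeasure (slab_of_size n s) (PiE {..<n} A) * pmf \<pi> s = ennreal (X s * pmf \<pi> s)"
      by (simp add: ennreal_mult'' X_nonneg)
  qed
  also have "\<dots> = ennreal (\<Sum>s\<in>{..n}. X s * pmf \<pi> s)"
    by (rule sum_ennreal) (simp add: X_nonneg)
  also have "(\<Sum>s\<in>{..n}. X s * pmf \<pi> s) = box_mixture n (\<lambda>s. pmf \<pi> s / real (n choose s)) A"
  proof -
    have "card S \<le> n" if "S \<in> Pow {..<n}" for S
      using that card_mono[of "{..<n}" S] by simp
    then have "card ` Pow {..<n} \<subseteq> {..n}"
      by auto
    then have "box_mixture n (\<lambda>s. pmf \<pi> s / real (n choose s)) A =
        (\<Sum>s\<in>{..n}. \<Sum>S\<in>{S \<in> Pow {..<n}. card S = s}. pmf \<pi> (card S) / real (n choose card S) * box_weight n S A)"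
      unfolding box_mixture_def by (intro sum.group[symmetric]) auto
    also have "\<dots> = (\<Sum>s\<in>{..n}. X s * pmf \<pi> s)"
    proof (intro sum.cong refl)
      fix s
      have "{S \<in> Pow {..<n}. card S = s} = {S. S \<subseteq> {..<n} \<and> card S = s}"
        by auto
      then show "(\<Sum>S\<in>{S \<in> Pow {..<n}. card S = s}. pmf \<pi> (card S) / real (n choose card S) * box_weight n S A) =
          X s * pmf \<pi> s"
        unfolding X_def by (simp add: sum_divide_distrib sum_distrib_left mult_ac)
    qed
    finally show ?thesis
      by simp
  qed
  finally show ?thesis .
qed

lemma box_weight_support_indicator:
  assumes T: "T \<subseteq> {..<n}" and S: "S \<subseteq> {..<n}" and G0: "measure G {0} = 0"
  shows "box_weight n S (\<lambda>i. if i \<in> T then - {0} else {0}) = (if S = T then 1 else 0)"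
proof -
  interpret G: prob_space G
    by (rule prob_space_G)
  have "measure G (- {0}) = 1"
    using G.prob_compl[of "{0}"] G0 sets_eq_imp_space_eq[OF sets_G] sets_G
    by (simp add: Compl_eq_Diff_UNIV)
  show ?thesis
  proof (cases "S = T")
    case True
    then show ?thesis
      unfolding box_weight_def using \<open>measure G (- {0}) = 1\<close> by (simp add: indicator_def)
  next
    case False
    then consider i where "i \<in> S" "i \<notin> T" | i where "i \<in> T" "i \<notin> S"
      by blast
    then show ?thesis
    proof cases
      case 1
      then have "(\<Prod>j\<in>S. measure G (if j \<in> T then - {0} else {0})) = 0"
        using S G0 by (intro prod_zero) (auto intro!: bexI[of _ i] finite_subset[OF S])
      then show ?thesis
        unfolding box_weight_def using False by simp
    next
      case 2
      then have zero: "(\<Prod>j\<in>{..<n} - S. indicator (if j \<in> T then - {0} else {0}) 0) = (0::real)"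
        using T by (intro prod_zero) (auto intro!: bexI[of _ i])
      show ?thesis
        unfolding box_weight_def zero using False by simp
    qed
  qed
qed

text \<open>Since G has no atom at 0, the box {\<theta>. \<theta>_i \<noteq> 0 \<longleftrightarrow> i \<in> T} isolates the weight of the support T.\<close>
lemma box_mixture_support_indicator:
  assumes T: "T \<subseteq> {..<n}" and G0: "measure G {0} = 0"
  shows "box_mixture n c (\<lambda>i. if i \<in> T then - {0} else {0}) = c (card T)"
proof -
  have "box_mixture n c (\<lambda>i. if i \<in> T then - {0} else {0}) =
      (\<Sum>S\<in>Pow {..<n}. if S = T then c (card T) else 0)"
    unfolding box_mixture_def using box_weight_support_indicator[OF T _ G0] by (intro sum.cong) auto
  also have "\<dots> = c (card T)"
    using T by simp
  finally show ?thesis .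
qed

lemma binomial_mixture_if_spike_slab_prior:
  assumes \<pi>: "set_pmf \<pi> \<subseteq> {..n}" and G0: "measure G {0} = 0" and \<Lambda>: "prob_on_unit_interval \<Lambda>"
    and eq: "model_selection_prior n \<pi> G = spike_slab_prior n \<Lambda> G"
  shows "binomial_mixture n \<pi> \<Lambda>"
  unfolding binomial_mixture_def
proof (intro conjI allI impI \<Lambda>)
  fix j assume "j \<le> n"
  define A where "A = (\<lambda>i::nat. if i < j then - {0::real} else {0})"
  have T: "{..<j} \<subseteq> {..<n}" "card {..<j} = j"
    using \<open>j \<le> n\<close> by auto
  have A_sets: "A i \<in> sets borel" for i
    by (simp add: A_def)
  have "ennreal (pmf \<pi> j / real (n choose j)) = emeasure (model_selection_prior n \<pi> G) (PiE {..<n} A)"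
    using emeasure_model_selection_prior_box[OF \<pi> A_sets] box_mixture_support_indicator[OF T(1) G0] T
    by (simp add: A_def)
  also have "\<dots> = ennreal (\<integral>\<alpha>. \<alpha>^j * (1-\<alpha>)^(n-j) \<partial>\<Lambda>)"
    using emeasure_spike_slab_prior_box[OF \<Lambda> A_sets] box_mixture_support_indicator[OF T(1) G0] T eq
    by (simp add: A_def)
  moreover have "0 \<le> (\<integral>\<alpha>. \<alpha>^j * (1-\<alpha>)^(n-j) \<partial>\<Lambda>)"
  proof (rule integral_nonneg_AE)
    show "AE \<alpha> in \<Lambda>. 0 \<le> \<alpha>^j * (1-\<alpha>)^(n-j)"
      using AE_prob_on_unit_interval[OF \<Lambda>] by eventually_elim simp
  qed
  ultimately show "(\<integral>\<alpha>. \<alpha>^j * (1-\<alpha>)^(n-j) \<partial>\<Lambda>) = pmf \<pi> j / real (n choose j)"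
    by simp
qed

lemma model_selection_prior_eq_spike_slab_prior:
  assumes \<pi>: "set_pmf \<pi> \<subseteq> {..n}" and mix: "binomial_mixture n \<pi> \<Lambda>"
  shows "model_selection_prior n \<pi> G = spike_slab_prior n \<Lambda> G"
proof (rule measure_eqI_PiM_finite[where I="{..<n}" and M="\<lambda>_. borel" and A="\<lambda>_. PiE {..<n} (\<lambda>_. UNIV)"])
  note \<Lambda> = binomial_mixtureD(1)[OF mix]
  show "sets (model_selection_prior n \<pi> G) = sets (PiM {..<n} (\<lambda>_. borel))"
    by (rule sets_model_selection_prior)
  show "sets (spike_slab_prior n \<Lambda> G) = sets (PiM {..<n} (\<lambda>_. borel))"
    by (rule sets_spike_slab_prior[OF prob_on_unit_intervalD(2)[OF \<Lambda>]])
  fix A :: "nat \<Rightarrow> real set" assume A: "\<And>i. i \<in> {..<n} \<Longrightarrow> A i \<in> sets borel"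
  have "box_mixture n (\<lambda>s. pmf \<pi> s / real (n choose s)) A =
      box_mixture n (\<lambda>s. \<integral>\<alpha>. \<alpha>^s * (1-\<alpha>)^(n-s) \<partial>\<Lambda>) A"
    using binomial_mixtureD(2)[OF mix] by (intro box_mixture_cong) simp
  then show "emeasure (model_selection_prior n \<pi> G) (PiE {..<n} A) =
      emeasure (spike_slab_prior n \<Lambda> G) (PiE {..<n} A)"
    using emeasure_model_selection_prior_box[OF \<pi> A] emeasure_spike_slab_prior_box[OF \<Lambda> A] by simp
next
  show "range (\<lambda>_::nat. PiE {..<n} (\<lambda>_. UNIV)) \<subseteq> prod_algebra {..<n} (\<lambda>_. borel)"
    by (auto intro!: prod_algebraI_finite)
  show "(\<Union>i::nat. PiE {..<n} (\<lambda>_. UNIV)) = space (PiM {..<n} (\<lambda>_. borel :: real measure))"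
    by (simp add: space_PiM)
  have "emeasure (model_selection_prior n \<pi> G) (PiE {..<n} (\<lambda>_. UNIV)) \<le> 1"
    by (rule prob_space.emeasure_le_1[OF prob_space_model_selection_prior])
  then show "emeasure (model_selection_prior n \<pi> G) (PiE {..<n} (\<lambda>_. UNIV)) \<noteq> \<infinity>"
    by (auto simp: top_unique)
qed simp

lemma has_spike_slab_form_iff_binomial_mixture:
  assumes "set_pmf \<pi> \<subseteq> {..n}" "measure G {0} = 0"
  shows "has_spike_slab_form n \<pi> G \<longleftrightarrow> (\<exists>\<Lambda>. binomial_mixture n \<pi> \<Lambda>)"
proof
  assume "has_spike_slab_form n \<pi> G"
  then obtain \<Lambda> where "prob_on_unit_interval \<Lambda>" "model_selection_prior n \<pi> G = spike_slab_prior n \<Lambda> G"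
    unfolding has_spike_slab_form_def prob_on_unit_interval_def by blast
  then show "\<exists>\<Lambda>. binomial_mixture n \<pi> \<Lambda>"
    using binomial_mixture_if_spike_slab_prior[OF assms] by blast
next
  assume "\<exists>\<Lambda>. binomial_mixture n \<pi> \<Lambda>"
  then obtain \<Lambda> where "binomial_mixture n \<pi> \<Lambda>"
    by blast
  then show "has_spike_slab_form n \<pi> G"
    using model_selection_prior_eq_spike_slab_prior[OF assms(1)] binomial_mixtureD(1)
    unfolding has_spike_slab_form_def prob_on_unit_interval_def by blast
qed

end

section \<open>Hankel characterisation of binomial mixtures\<close>

lemma shiftF_eq: "shiftF \<mu> = (\<lambda>i. \<mu> (i + 1))"
  by (simp add: shiftF_def fun_eq_iff)

lemma binomial_mixture_if_psd_hankel:
  fixes \<pi> :: "nat pmf"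
  assumes \<pi>: "set_pmf \<pi> \<subseteq> {..n}" and c: "c \<in> {0..pmf \<pi> n}"
    and psd0: "psd k (hankel k (mu_vec n \<pi> c))" and psd1: "psd d (hankel d (shiftF (mu_vec n \<pi> c)))"
    and n: "2*k \<le> n" "2*d + 1 \<le> n" "n \<le> 2*k + 1" "n \<le> 2*d + 2"
  shows "\<exists>\<Lambda>. binomial_mixture n \<pi> \<Lambda>"
proof -
  have "(\<Sum>j\<le>n. real (n choose j) * (pmf \<pi> j / real (n choose j))) = (\<Sum>j\<le>n. pmf \<pi> j)"
    by (intro sum.cong refl) simp
  also have "\<dots> = 1"
    using \<pi> by (intro sum_pmf_eq_1) auto
  finally have total: "(\<Sum>j\<le>n. real (n choose j) * (pmf \<pi> j / real (n choose j))) = 1" .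
  obtain \<Lambda> where "prob_on_unit_interval \<Lambda>"
    "\<And>j. j \<le> n \<Longrightarrow> (\<integral>\<alpha>. \<alpha>^j * (1-\<alpha>)^(n-j) \<partial>\<Lambda>) = pmf \<pi> j / real (n choose j)"
    using exists_prob_on_unit_interval_moments
        [OF nonneg_on_unit_interval_imp_moment_sum_nonneg[OF c psd0 psd1 n] total]
    by metis
  then show ?thesis
    unfolding binomial_mixture_def by blast
qed

lemma binomial_mixture_iff_odd:
  assumes \<pi>: "set_pmf \<pi> \<subseteq> {..n}" and n: "n = 2 * k + 1"
  shows "(\<exists>\<Lambda>. binomial_mixture n \<pi> \<Lambda>) \<longleftrightarrow>
    (\<exists>c \<in> {0..pmf \<pi> n}. psd k (hankel k (mu_vec n \<pi> c)) \<and> psd k (hankel k (shiftF (mu_vec n \<pi> c))) \<and>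
      in_range k (\<lambda>i. mu_vec n \<pi> c (k + 1 + i)) (hankel k (mu_vec n \<pi> c)))"
proof
  assume "\<exists>\<Lambda>. binomial_mixture n \<pi> \<Lambda>"
  then obtain \<Lambda> where mix: "binomial_mixture n \<pi> \<Lambda>"
    by blast
  define c where "c = (\<integral>\<alpha>. bern_trunc n n \<alpha> \<partial>\<Lambda>)"
  have "psd k (hankel k (mu_vec n \<pi> c))"
    using binomial_mixture_imp_psd[OF mix, of 0 k] n by (simp add: c_def)
  moreover have "psd k (hankel k (shiftF (mu_vec n \<pi> c)))"
    using binomial_mixture_imp_psd[OF mix, of 1 k] n by (simp add: c_def shiftF_eq)
  moreover have "in_range k (\<lambda>i. mu_vec n \<pi> c (k + 1 + i)) (hankel k (mu_vec n \<pi> c))"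
    using binomial_mixture_imp_in_range[OF mix, of 0 k] n by (simp add: c_def)
  moreover have "c \<in> {0..pmf \<pi> n}"
    unfolding c_def by (rule bern_trunc_top_moment_bounds[OF mix])
  ultimately show "\<exists>c \<in> {0..pmf \<pi> n}. psd k (hankel k (mu_vec n \<pi> c)) \<and>
      psd k (hankel k (shiftF (mu_vec n \<pi> c))) \<and>
      in_range k (\<lambda>i. mu_vec n \<pi> c (k + 1 + i)) (hankel k (mu_vec n \<pi> c))"
    by blast
next
  assume "\<exists>c \<in> {0..pmf \<pi> n}. psd k (hankel k (mu_vec n \<pi> c)) \<and> psd k (hankel k (shiftF (mu_vec n \<pi> c))) \<and>
      in_range k (\<lambda>i. mu_vec n \<pi> c (k + 1 + i)) (hankel k (mu_vec n \<pi> c))"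
  then obtain c where "c \<in> {0..pmf \<pi> n}" "psd k (hankel k (mu_vec n \<pi> c))"
    "psd k (hankel k (shiftF (mu_vec n \<pi> c)))"
    by blast
  then show "\<exists>\<Lambda>. binomial_mixture n \<pi> \<Lambda>"
    by (rule binomial_mixture_if_psd_hankel[OF \<pi>]) (use n in simp_all)
qed

lemma binomial_mixture_iff_even:
  assumes \<pi>: "set_pmf \<pi> \<subseteq> {..n}" and n: "n = 2 * k" "n \<ge> 1"
  shows "(\<exists>\<Lambda>. binomial_mixture n \<pi> \<Lambda>) \<longleftrightarrow>
    (\<exists>c \<in> {0..pmf \<pi> n}. psd k (hankel k (mu_vec n \<pi> c)) \<and>
      psd (k - 1) (hankel (k - 1) (shiftF (mu_vec n \<pi> c))) \<and>
      in_range (k - 1) (\<lambda>i. mu_vec n \<pi> c (k + 1 + i)) (hankel (k - 1) (shiftF (mu_vec n \<pi> c))))"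
proof
  assume "\<exists>\<Lambda>. binomial_mixture n \<pi> \<Lambda>"
  then obtain \<Lambda> where mix: "binomial_mixture n \<pi> \<Lambda>"
    by blast
  define c where "c = (\<integral>\<alpha>. bern_trunc n n \<alpha> \<partial>\<Lambda>)"
  have k: "n = 1 + 2 * (k - 1) + 1" "1 + (k - 1) + 1 + i = k + 1 + i" for i
    using n by auto
  have "psd k (hankel k (mu_vec n \<pi> c))"
    using binomial_mixture_imp_psd[OF mix, of 0 k] n by (simp add: c_def)
  moreover have "psd (k - 1) (hankel (k - 1) (shiftF (mu_vec n \<pi> c)))"
    using binomial_mixture_imp_psd[OF mix, of 1 "k - 1"] k(1) by (simp add: c_def shiftF_eq)
  moreover have "in_range (k - 1) (\<lambda>i. mu_vec n \<pi> c (k + 1 + i)) (hankel (k - 1) (shiftF (mu_vec n \<pi> c)))"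
    using binomial_mixture_imp_in_range[OF mix k(1)] unfolding k(2) by (simp add: c_def shiftF_eq)
  moreover have "c \<in> {0..pmf \<pi> n}"
    unfolding c_def by (rule bern_trunc_top_moment_bounds[OF mix])
  ultimately show "\<exists>c \<in> {0..pmf \<pi> n}. psd k (hankel k (mu_vec n \<pi> c)) \<and>
      psd (k - 1) (hankel (k - 1) (shiftF (mu_vec n \<pi> c))) \<and>
      in_range (k - 1) (\<lambda>i. mu_vec n \<pi> c (k + 1 + i)) (hankel (k - 1) (shiftF (mu_vec n \<pi> c)))"
    by blast
next
  assume "\<exists>c \<in> {0..pmf \<pi> n}. psd k (hankel k (mu_vec n \<pi> c)) \<and>
      psd (k - 1) (hankel (k - 1) (shiftF (mu_vec n \<pi> c))) \<and>
      in_range (k - 1) (\<lambda>i. mu_vec n \<pi> c (k + 1 + i)) (hankel (k - 1) (shiftF (mu_vec n \<pi> c)))"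
  then obtain c where "c \<in> {0..pmf \<pi> n}" "psd k (hankel k (mu_vec n \<pi> c))"
    "psd (k - 1) (hankel (k - 1) (shiftF (mu_vec n \<pi> c)))"
    by blast
  then show "\<exists>\<Lambda>. binomial_mixture n \<pi> \<Lambda>"
    by (rule binomial_mixture_if_psd_hankel[OF \<pi>]) (use n in simp_all)
qed

theorem theorem2:
  fixes n :: nat and \<pi> :: "nat pmf" and G :: "real measure"
  assumes "n \<ge> 1"
    and "set_pmf \<pi> \<subseteq> {..n}"
    and "prob_space G" and "sets G = sets (borel :: real measure)"
    and "\<exists>f. f \<in> borel_measurable borel \<and> G = density lborel f"
  shows "(\<forall>k. n = 2 * k + 1 \<longrightarrow>
            (has_spike_slab_form n \<pi> G \<longleftrightarrow>
             (\<exists>c \<in> {0..pmf \<pi> n}.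
                psd k (hankel k (mu_vec n \<pi> c)) \<and>
                psd k (hankel k (shiftF (mu_vec n \<pi> c))) \<and>
                in_range k (\<lambda>i. mu_vec n \<pi> c (k + 1 + i)) (hankel k (mu_vec n \<pi> c)))))
       \<and> (\<forall>k. n = 2 * k \<longrightarrow>
            (has_spike_slab_form n \<pi> G \<longleftrightarrow>
             (\<exists>c \<in> {0..pmf \<pi> n}.
                psd k (hankel k (mu_vec n \<pi> c)) \<and>
                psd (k - 1) (hankel (k - 1) (shiftF (mu_vec n \<pi> c))) \<and>
                in_range (k - 1) (\<lambda>i. mu_vec n \<pi> c (k + 1 + i))
                  (hankel (k - 1) (shiftF (mu_vec n \<pi> c))))))"
proof -
  interpret slab_prob G
    by (rule slab_prob.intro[OF assms(3,4)])
  have "measure G {0} = 0"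
    using assms(5) measure_density_lborel_singleton by blast
  then have spike_slab_iff: "has_spike_slab_form n \<pi> G \<longleftrightarrow> (\<exists>\<Lambda>. binomial_mixture n \<pi> \<Lambda>)"
    by (rule has_spike_slab_form_iff_binomial_mixture[OF assms(2)])
  show ?thesis
    unfolding spike_slab_iff
    using binomial_mixture_iff_odd[OF assms(2)] binomial_mixture_iff_even[OF assms(2) _ assms(1)]
    by blast
qed

end
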